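(* Let $G$ be a graph containing no induced triangle and no induced path on $5$ vertices. Then $\operatorname{reg}(G)$ equals the maximum, over all families $\{H_1,\dots,H_r\}$ of pairwise vertex-disjoint induced subgraphs of $G$ each isomorphic to $K_2$ or to the $5$-cycle $C_5$ and with no edges of $G$ between distinct $H_i$, of $(\#\{i:H_i\cong K_2\})+2(\#\{i:H_i\cong C_5\})$ (the empty family giving $0$).
   Context: $\operatorname{reg}(G)=\max\{j\ge0:\widetilde H_{j-1}(\operatorname{Ind}(G[S]);\Bbbk)\neq0\text{ for some }S\subseteq V(G)\}$ over a field $\Bbbk$, where $\operatorname{Ind}$ is the independence complex (regularity of $R/I(G)$ for the edge ideal). *)

theory Defs
  imports Main
begin

definition simple_graph :: "'a set \<Rightarrow> ('a \<Rightarrow> 'a \<Rightarrow> bool) \<Rightarrow> bool" where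
  "simple_graph V E \<longleftrightarrow> finite V \<and> (\<forall>x y. E x y \<longrightarrow> E y x)
     \<and> (\<forall>x. \<not> E x x) \<and> (\<forall>x y. E x y \<longrightarrow> x \<in> V \<and> y \<in> V)"

definition ind_complex :: "('a \<Rightarrow> 'a \<Rightarrow> bool) \<Rightarrow> 'a set \<Rightarrow> 'a set set" where
  "ind_complex E S = {F. F \<subseteq> S \<and> (\<forall>x\<in>F. \<forall>y\<in>F. \<not> E x y)}"

text \<open>A chain of faces of size m
(i.e. dimension m-1) is a function on sets supported on faces of the complex of card m.
Orientation is induced by the linear order on vertices.\<close>

definition is_chain :: "'a set set \<Rightarrow> nat \<Rightarrow> ('a set \<Rightarrow> 'k::field) \<Rightarrow> bool" where
  "is_chain \<Delta> m c \<longleftrightarrow> (\<forall>F. c F \<noteq> 0 \<longrightarrow> F \<in> \<Delta> \<and> card F = m)"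

definition bd_sign :: "'a::linorder set \<Rightarrow> 'a set \<Rightarrow> 'k::field" where
  "bd_sign \<sigma> \<tau> = (-1) ^ card {x\<in>\<tau>. \<exists>v\<in>\<sigma> - \<tau>. x < v}"

definition boundary :: "'a::linorder set set \<Rightarrow> ('a set \<Rightarrow> 'k::field) \<Rightarrow> ('a set \<Rightarrow> 'k)" where
  "boundary \<Delta> c \<tau> = (\<Sum>\<sigma>\<in>{\<sigma>\<in>\<Delta>. \<tau> \<subseteq> \<sigma> \<and> card \<sigma> = Suc (card \<tau>)}. bd_sign \<sigma> \<tau> * c \<sigma>)"

text \<open>Reduced homology \<open>H~_{m-1}(\<Delta>; k)\<close> is nonzero: there is a cycle on faces of size m
that is not a boundary of a chain on faces of size m+1. (For m = 0 every chain is a cycle,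
the augmented complex having nothing in dimension -2.)\<close>

definition red_homology_nonzero :: "'k::field itself \<Rightarrow> 'a::linorder set set \<Rightarrow> nat \<Rightarrow> bool" where
  "red_homology_nonzero _ \<Delta> m \<longleftrightarrow>
     (\<exists>z :: 'a set \<Rightarrow> 'k. is_chain \<Delta> m z \<and> (m > 0 \<longrightarrow> boundary \<Delta> z = (\<lambda>_. 0))
        \<and> \<not> (\<exists>b :: 'a set \<Rightarrow> 'k. is_chain \<Delta> (Suc m) b \<and> boundary \<Delta> b = z))"

definition reg :: "'k::field itself \<Rightarrow> 'a::linorder set \<Rightarrow> ('a \<Rightarrow> 'a \<Rightarrow> bool) \<Rightarrow> nat" where
  "reg K V E = Max {j. \<exists>S\<subseteq>V. red_homology_nonzero K (ind_complex E S) j}"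

definition has_induced_triangle :: "'a set \<Rightarrow> ('a \<Rightarrow> 'a \<Rightarrow> bool) \<Rightarrow> bool" where
  "has_induced_triangle V E \<longleftrightarrow> (\<exists>x\<in>V. \<exists>y\<in>V. \<exists>z\<in>V. E x y \<and> E y z \<and> E x z)"

definition has_induced_P5 :: "'a set \<Rightarrow> ('a \<Rightarrow> 'a \<Rightarrow> bool) \<Rightarrow> bool" where
  "has_induced_P5 V E \<longleftrightarrow> (\<exists>f :: nat \<Rightarrow> 'a. inj_on f {0..<5} \<and> f ` {0..<5} \<subseteq> V
      \<and> (\<forall>i<5. \<forall>j<5. E (f i) (f j) \<longleftrightarrow> (j = i + 1 \<or> i = j + 1)))"

definition induced_K2 :: "('a \<Rightarrow> 'a \<Rightarrow> bool) \<Rightarrow> 'a set \<Rightarrow> bool" where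
  "induced_K2 E W \<longleftrightarrow> (\<exists>x y. W = {x, y} \<and> x \<noteq> y \<and> E x y)"

definition induced_C5 :: "('a \<Rightarrow> 'a \<Rightarrow> bool) \<Rightarrow> 'a set \<Rightarrow> bool" where
  "induced_C5 E W \<longleftrightarrow> (\<exists>f :: nat \<Rightarrow> 'a. bij_betw f {0..<5} W
      \<and> (\<forall>i<5. \<forall>j<5. E (f i) (f j) \<longleftrightarrow> (j = (i + 1) mod 5 \<or> i = (j + 1) mod 5)))"

definition admissible_family :: "'a set \<Rightarrow> ('a \<Rightarrow> 'a \<Rightarrow> bool) \<Rightarrow> 'a set set \<Rightarrow> bool" where
  "admissible_family V E \<H> \<longleftrightarrow>
     (\<forall>W\<in>\<H>. W \<subseteq> V \<and> (induced_K2 E W \<or> induced_C5 E W))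
     \<and> (\<forall>W1\<in>\<H>. \<forall>W2\<in>\<H>. W1 \<noteq> W2 \<longrightarrow> W1 \<inter> W2 = {} \<and> (\<forall>x\<in>W1. \<forall>y\<in>W2. \<not> E x y))"

definition family_value :: "('a \<Rightarrow> 'a \<Rightarrow> bool) \<Rightarrow> 'a set set \<Rightarrow> nat" where
  "family_value E \<H> = card {W\<in>\<H>. induced_K2 E W} + 2 * card {W\<in>\<H>. induced_C5 E W}"

end

theory Submission
  imports Defs "HOL-Library.Function_Algebras"
begin

text \<open>
  Lower bound: an induced \<open>K\<^sub>2\<close> carries a reduced 0-cycle of its independence complex (two
  points) and an induced \<open>C\<^sub>5\<close> a 1-cycle (its independence complex is again a pentagon).
  Members of an admissible family are pairwise non-adjacent, so the independence complex of their
  union is the join of theirs, and joining these cycles gives a cycle of degree equal to the value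
  of the family.  Each of the cycles is non-zero on a facet, which no boundary can be.

  Upper bound, by induction on \<open>|S|\<close>: a non-zero class of \<open>Ind(G[S])\<close> survives either in
  \<open>Ind(G[S - x])\<close> or, one degree lower, in the link \<open>Ind(G[S - N[x]])\<close>.  An isolated vertex
  makes the complex a cone, and deleting a vertex whose neighbourhood contains another one's
  leaves the link a cone.  Otherwise, as \<open>G\<close> has no triangle and no induced \<open>P\<^sub>5\<close>, every
  vertex \<open>x\<close> with two neighbours lies on an induced pentagon forming a component, and a vertex with
  one neighbour lies on an isolated edge; adding this component to the family obtained for the
  link raises its value by at least one.
\<close>

section \<open>Signs and boundaries in independence complexes\<close>

definition ins_sign :: "'a::linorder \<Rightarrow> 'a set \<Rightarrow> 'k::field" where
  "ins_sign v \<tau> = (-1) ^ card {x\<in>\<tau>. x < v}"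

lemma ins_sign_square [simp]: "ins_sign v \<tau> * ins_sign v \<tau> = (1::'k::field)"
  unfolding ins_sign_def by (simp flip: power_add)

lemma ins_sign_square_left [simp]: "ins_sign v \<tau> * (ins_sign v \<tau> * c) = (c::'k::field)"
  by (simp flip: mult.assoc)

lemma ins_sign_empty [simp]: "ins_sign v {} = 1"
  unfolding ins_sign_def by simp

lemma ins_sign_nonzero [simp]: "ins_sign v \<tau> \<noteq> (0::'k::field)"
  unfolding ins_sign_def by simp

lemma ins_sign_insert:
  assumes "finite \<rho>" "y \<notin> \<rho>"
  shows "ins_sign v (insert y \<rho>) = (if y < v then -1 else 1) * (ins_sign v \<rho> :: 'k::field)"
proof (cases "y < v")
  case True
  then have "{x\<in>insert y \<rho>. x < v} = insert y {x\<in>\<rho>. x < v}" by auto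
  with True assms show ?thesis unfolding ins_sign_def by simp
next
  case False
  then have "{x\<in>insert y \<rho>. x < v} = {x\<in>\<rho>. x < v}" by auto
  with False show ?thesis unfolding ins_sign_def by simp
qed

lemma ins_sign_swap:
  assumes "finite \<rho>" "y \<notin> \<rho>" "v \<notin> \<rho>" "v \<noteq> y"
  shows "ins_sign v (insert y \<rho>) * ins_sign y (insert v \<rho>) = - (ins_sign v \<rho> * (ins_sign y \<rho> :: 'k::field))"
  using assms by (cases "y < v") (auto simp: ins_sign_insert)

lemma ins_sign_Un:
  assumes "finite F1" "finite F2" "F1 \<inter> F2 = {}"
  shows "ins_sign v (F1 \<union> F2) = ins_sign v F1 * (ins_sign v F2 :: 'k::field)"
proof -
  have "{x\<in>F1 \<union> F2. x < v} = {x\<in>F1. x < v} \<union> {x\<in>F2. x < v}" by auto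
  with assms show ?thesis unfolding ins_sign_def by (simp add: card_Un_disjoint disjoint_iff power_add)
qed

lemma ins_sign_mult_greater:
  assumes "finite F" "v \<notin> F"
  shows "ins_sign v F * (-1) ^ card {x\<in>F. v < x} = ((-1) ^ card F :: 'k::field)"
proof -
  have F: "F = {x\<in>F. x < v} \<union> {x\<in>F. v < x}" using assms(2) by (auto simp: not_less le_less)
  have "card ({x\<in>F. x < v} \<union> {x\<in>F. v < x}) = card {x\<in>F. x < v} + card {x\<in>F. v < x}"
    by (rule card_Un_disjoint) (use assms(1) in auto)
  then have "card F = card {x\<in>F. x < v} + card {x\<in>F. v < x}"
    by (simp only: F[symmetric])
  then show ?thesis unfolding ins_sign_def by (simp add: power_add)
qed

lemma bd_sign_insert: "v \<notin> \<tau> \<Longrightarrow> bd_sign (insert v \<tau>) \<tau> = ins_sign v \<tau>"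
  unfolding bd_sign_def ins_sign_def by (simp add: insert_Diff_if)

definition supported_on :: "'a set set \<Rightarrow> ('a set \<Rightarrow> 'k::zero) \<Rightarrow> bool" where
  "supported_on \<Delta> c \<longleftrightarrow> (\<forall>F. c F \<noteq> 0 \<longrightarrow> F \<in> \<Delta>)"

lemma is_chain_supported_on: "is_chain \<Delta> m c \<Longrightarrow> supported_on \<Delta> c"
  unfolding is_chain_def supported_on_def by blast

lemma supported_onD: "supported_on \<Delta> c \<Longrightarrow> F \<notin> \<Delta> \<Longrightarrow> c F = 0"
  unfolding supported_on_def by blast

lemma finite_ind_complex_face: "finite T \<Longrightarrow> F \<in> ind_complex E T \<Longrightarrow> finite F"
  unfolding ind_complex_def using finite_subset by auto

lemma ind_complex_mono: "S \<subseteq> T \<Longrightarrow> ind_complex E S \<subseteq> ind_complex E T"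
  unfolding ind_complex_def by auto

lemma is_chain_add: "is_chain \<Delta> m a \<Longrightarrow> is_chain \<Delta> m b \<Longrightarrow> is_chain \<Delta> m (a + b)"
  unfolding is_chain_def by (metis add.right_neutral plus_fun_apply)

lemma is_chain_diff: "is_chain \<Delta> m a \<Longrightarrow> is_chain \<Delta> m b \<Longrightarrow> is_chain \<Delta> m (a - b)"
  unfolding is_chain_def by (metis diff_self fun_diff_def)

lemma is_chain_mono: "\<Delta> \<subseteq> \<Delta>' \<Longrightarrow> is_chain \<Delta> m c \<Longrightarrow> is_chain \<Delta>' m c"
  unfolding is_chain_def by blast

lemma boundary_add: "boundary \<Delta> (c1 + c2) = boundary \<Delta> c1 + boundary \<Delta> c2"
  unfolding boundary_def by (simp add: fun_eq_iff distrib_left sum.distrib)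

lemma boundary_diff: "boundary \<Delta> (c1 - c2) = boundary \<Delta> c1 - boundary \<Delta> c2"
  unfolding boundary_def by (simp add: fun_eq_iff right_diff_distrib sum_subtractf)

lemma boundary_zero [simp]: "boundary \<Delta> 0 = 0"
  unfolding boundary_def by (simp add: fun_eq_iff)

lemma boundary_0_chain: "is_chain \<Delta> 0 z \<Longrightarrow> boundary \<Delta> z = 0"
  unfolding boundary_def is_chain_def by (auto simp: fun_eq_iff intro!: sum.neutral)

lemma boundary_eq_0_if_avoiding:
  "(\<And>\<sigma>. x \<in> \<sigma> \<Longrightarrow> c \<sigma> = 0) \<Longrightarrow> x \<in> \<tau> \<Longrightarrow> boundary \<Delta> c \<tau> = 0"
  unfolding boundary_def by (auto intro!: sum.neutral)

lemma boundary_ind_complex_infinite: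
  "finite T \<Longrightarrow> infinite \<tau> \<Longrightarrow> boundary (ind_complex E T) c \<tau> = 0"
  unfolding boundary_def using finite_ind_complex_face finite_subset
  by (metis (no_types, lifting) mem_Collect_eq sum.neutral)

text \<open>In an independence complex the cofaces of \<open>\<tau>\<close> are the sets \<open>insert v \<tau>\<close>; the terms
  with \<open>insert v \<tau>\<close> not a face vanish because the chain is supported on the complex.\<close>

lemma boundary_ind_complex:
  assumes fin: "finite T" and c: "supported_on (ind_complex E T) c"
  shows "boundary (ind_complex E T) c \<tau> = (\<Sum>v\<in>T - \<tau>. ins_sign v \<tau> * c (insert v \<tau>))"
proof (cases "\<tau> \<subseteq> T \<and> finite \<tau>")
  case False
  then have no_cofaces: "{\<sigma>\<in>ind_complex E T. \<tau> \<subseteq> \<sigma> \<and> card \<sigma> = Suc (card \<tau>)} = {}"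
    using finite_ind_complex_face[OF fin] finite_subset unfolding ind_complex_def by auto
  have "c (insert v \<tau>) = 0" for v
    using False supported_onD[OF c] finite_ind_complex_face[OF fin]
    unfolding ind_complex_def by (metis (no_types, lifting) finite_insert insert_subset mem_Collect_eq)
  then show ?thesis unfolding boundary_def no_cofaces by simp
next
  case True
  let ?A = "{\<sigma>\<in>ind_complex E T. \<tau> \<subseteq> \<sigma> \<and> card \<sigma> = Suc (card \<tau>)}"
  let ?B = "{v\<in>T - \<tau>. insert v \<tau> \<in> ind_complex E T}"
  have "bij_betw (\<lambda>v. insert v \<tau>) ?B ?A"
  proof (rule bij_betwI')
    fix \<sigma> assume \<sigma>: "\<sigma> \<in> ?A"
    then have "finite \<sigma>" using finite_ind_complex_face[OF fin] by blast
    with \<sigma> True have "card (\<sigma> - \<tau>) = 1" by (simp add: card_Diff_subset)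
    then obtain v where v: "\<sigma> - \<tau> = {v}" using card_1_singletonE by blast
    then have "\<sigma> = insert v \<tau>" using \<sigma> by auto
    with \<sigma> v show "\<exists>v\<in>?B. \<sigma> = insert v \<tau>" unfolding ind_complex_def by auto
  qed (use True in auto)
  then have "boundary (ind_complex E T) c \<tau> = (\<Sum>v\<in>?B. bd_sign (insert v \<tau>) \<tau> * c (insert v \<tau>))"
    unfolding boundary_def by (simp add: sum.reindex_bij_betw[symmetric])
  also have "\<dots> = (\<Sum>v\<in>T - \<tau>. ins_sign v \<tau> * c (insert v \<tau>))"
    using fin supported_onD[OF c] by (intro sum.mono_neutral_cong_left) (auto simp: bd_sign_insert)
  finally show ?thesis .
qed

lemma boundary_ind_complex_mono:
  assumes fin: "finite T" and ST: "S \<subseteq> T" and c: "supported_on (ind_complex E S) c"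
  shows "boundary (ind_complex E T) c = boundary (ind_complex E S) c"
proof
  fix \<tau>
  have cT: "supported_on (ind_complex E T) c"
    using c ind_complex_mono[OF ST] unfolding supported_on_def by blast
  have "v \<in> S" if "c (insert v \<tau>) \<noteq> 0" for v
    using c that unfolding supported_on_def ind_complex_def by blast
  then show "boundary (ind_complex E T) c \<tau> = boundary (ind_complex E S) c \<tau>"
    using fin ST finite_subset[OF ST fin]
    by (auto simp: boundary_ind_complex[OF _ cT] boundary_ind_complex[OF _ c]
        intro!: sum.mono_neutral_right)
qed

section \<open>Cones\<close>

definition cone_chain :: "'a::linorder \<Rightarrow> ('a set \<Rightarrow> 'k::field) \<Rightarrow> 'a set \<Rightarrow> 'k" where
  "cone_chain x c \<sigma> = (if x \<in> \<sigma> then ins_sign x (\<sigma> - {x}) * c (\<sigma> - {x}) else 0)"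

lemma cone_chain_insert [simp]: "x \<notin> \<rho> \<Longrightarrow> cone_chain x c (insert x \<rho>) = ins_sign x \<rho> * c \<rho>"
  unfolding cone_chain_def by simp

lemma cone_chain_zero [simp]: "cone_chain x 0 = 0"
  unfolding cone_chain_def by (simp add: fun_eq_iff)

lemma cone_chain_coface:
  assumes fin: "finite \<rho>" and x: "x \<notin> \<rho>" and v: "v \<notin> \<rho>" "v \<noteq> x"
  shows "ins_sign v (insert x \<rho>) * cone_chain x c (insert v (insert x \<rho>))
    = - ins_sign x \<rho> * (ins_sign v \<rho> * c (insert v \<rho>))"
proof -
  have "insert v (insert x \<rho>) = insert x (insert v \<rho>)" by auto
  with x v have "ins_sign v (insert x \<rho>) * cone_chain x c (insert v (insert x \<rho>))
      = (ins_sign v (insert x \<rho>) * ins_sign x (insert v \<rho>)) * c (insert v \<rho>)"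
    by (simp add: mult.assoc)
  then show ?thesis by (simp add: ins_sign_swap[OF fin x v] algebra_simps)
qed

lemma boundary_cone_chain:
  assumes fin: "finite T" and x: "x \<in> T"
    and c: "supported_on (ind_complex E T) c"
    and xc: "supported_on (ind_complex E T) (cone_chain x c)"
  shows "boundary (ind_complex E T) (cone_chain x c) = c - cone_chain x (boundary (ind_complex E T) c)"
proof
  fix \<tau>
  let ?bd = "boundary (ind_complex E T)"
  show "?bd (cone_chain x c) \<tau> = (c - cone_chain x (?bd c)) \<tau>"
  proof (cases "finite \<tau>")
    case False
    then have "c \<tau> = 0"
      using supported_onD[OF c] finite_ind_complex_face[OF fin] by blast
    with False fin show ?thesis
      by (simp add: boundary_ind_complex_infinite cone_chain_def)
  next
    case fin\<tau>: True
    show ?thesis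
    proof (cases "x \<in> \<tau>")
      case False
      have "?bd (cone_chain x c) \<tau> = (\<Sum>v\<in>T - \<tau>. ins_sign v \<tau> * cone_chain x c (insert v \<tau>))"
        by (rule boundary_ind_complex[OF fin xc])
      also have "\<dots> = (\<Sum>v\<in>{x}. ins_sign v \<tau> * cone_chain x c (insert v \<tau>))"
        using False x fin by (intro sum.mono_neutral_right) (auto simp: cone_chain_def)
      finally show ?thesis using False by (simp add: cone_chain_def mult.assoc[symmetric])
    next
      case True
      define \<rho> where "\<rho> = \<tau> - {x}"
      have \<tau>: "\<tau> = insert x \<rho>" and x\<rho>: "x \<notin> \<rho>" and fin\<rho>: "finite \<rho>"
        using True fin\<tau> by (auto simp: \<rho>_def)
      let ?S = "\<Sum>v\<in>T - \<tau>. ins_sign v \<rho> * c (insert v \<rho>)"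
      have "?bd (cone_chain x c) \<tau> = (\<Sum>v\<in>T - \<tau>. ins_sign v \<tau> * cone_chain x c (insert v \<tau>))"
        by (rule boundary_ind_complex[OF fin xc])
      also have "\<dots> = (\<Sum>v\<in>T - \<tau>. - ins_sign x \<rho> * (ins_sign v \<rho> * c (insert v \<rho>)))"
        unfolding \<tau> using cone_chain_coface[OF fin\<rho> x\<rho>] by (intro sum.cong) auto
      also have "\<dots> = - ins_sign x \<rho> * ?S"
        by (simp add: sum_distrib_left)
      finally have lhs: "?bd (cone_chain x c) \<tau> = - ins_sign x \<rho> * ?S" .
      have "T - \<rho> = insert x (T - \<tau>)" using x \<tau> x\<rho> by auto
      then have "?bd c \<rho> = (\<Sum>v\<in>insert x (T - \<tau>). ins_sign v \<rho> * c (insert v \<rho>))"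
        using boundary_ind_complex[OF fin c] by simp
      also have "\<dots> = ins_sign x \<rho> * c \<tau> + ?S"
        using fin \<tau> by simp
      finally have "?bd c \<rho> = ins_sign x \<rho> * c \<tau> + ?S" .
      then show ?thesis
        using lhs \<tau> x\<rho> by (simp add: distrib_left mult.assoc[symmetric])
    qed
  qed
qed

lemma is_chain_cone_chain:
  assumes fin: "finite T" and c: "is_chain (ind_complex E T) m c"
    and cone: "\<And>F. c F \<noteq> 0 \<Longrightarrow> x \<notin> F \<Longrightarrow> insert x F \<in> ind_complex E T"
  shows "is_chain (ind_complex E T) (Suc m) (cone_chain x c)"
  unfolding is_chain_def
proof (intro allI impI)
  fix \<sigma> assume "cone_chain x c \<sigma> \<noteq> 0"
  then have x: "x \<in> \<sigma>" and nz: "c (\<sigma> - {x}) \<noteq> 0" by (auto simp: cone_chain_def split: if_splits)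
  then have "\<sigma> - {x} \<in> ind_complex E T" "card (\<sigma> - {x}) = m"
    using c unfolding is_chain_def by auto
  moreover have "\<sigma> = insert x (\<sigma> - {x})" using x by auto
  ultimately show "\<sigma> \<in> ind_complex E T \<and> card \<sigma> = Suc m"
    using cone[OF nz] finite_ind_complex_face[OF fin] by (metis card_insert_disjoint Diff_iff insertI1)
qed

definition is_boundary :: "'a::linorder set set \<Rightarrow> nat \<Rightarrow> ('a set \<Rightarrow> 'k::field) \<Rightarrow> bool" where
  "is_boundary \<Delta> m z \<longleftrightarrow> (\<exists>b. is_chain \<Delta> (Suc m) b \<and> boundary \<Delta> b = z)"

text \<open>The cycle condition, which the definition of \<open>red_homology_nonzero\<close> omits in degree 0,
  holds automatically there.\<close>

lemma red_homology_nonzero_iff: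
  "red_homology_nonzero (K::'k::field itself) \<Delta> m \<longleftrightarrow>
     (\<exists>z::'a::linorder set \<Rightarrow> 'k. is_chain \<Delta> m z \<and> boundary \<Delta> z = 0 \<and> \<not> is_boundary \<Delta> m z)"
  unfolding red_homology_nonzero_def is_boundary_def zero_fun_def[symmetric]
  by (metis boundary_0_chain gr0I)

lemma cone_cycle_is_boundary:
  assumes fin: "finite T" and x: "x \<in> T"
    and z: "is_chain (ind_complex E T) m z" and cyc: "boundary (ind_complex E T) z = 0"
    and cone: "\<And>F. z F \<noteq> 0 \<Longrightarrow> x \<notin> F \<Longrightarrow> insert x F \<in> ind_complex E T"
  shows "is_boundary (ind_complex E T) m z"
proof -
  have xz: "is_chain (ind_complex E T) (Suc m) (cone_chain x z)"
    by (rule is_chain_cone_chain[OF fin z cone])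
  have "boundary (ind_complex E T) (cone_chain x z) = z"
    using boundary_cone_chain[OF fin x is_chain_supported_on[OF z] is_chain_supported_on[OF xz]] cyc
    by simp
  with xz show ?thesis unfolding is_boundary_def by blast
qed

lemma isolated_vertex_red_homology_zero:
  assumes fin: "finite T" and y: "y \<in> T" "\<not> E y y" and iso: "\<forall>v\<in>T. \<not> E y v \<and> \<not> E v y"
  shows "\<not> red_homology_nonzero (K::'k::field itself) (ind_complex E T) m"
proof -
  have "insert y F \<in> ind_complex E T" if "F \<in> ind_complex E T" for F
    using that y iso unfolding ind_complex_def by auto
  then show ?thesis
    unfolding red_homology_nonzero_iff
    by (metis cone_cycle_is_boundary[OF fin y(1)] is_chain_supported_on supported_on_def)
qed

lemma red_homology_nonzero_le_card:
  assumes fin: "finite T" and "red_homology_nonzero (K::'k::field itself) (ind_complex E T) m"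
  shows "m \<le> card T"
proof -
  obtain z :: "'a::linorder set \<Rightarrow> 'k" where z: "is_chain (ind_complex E T) m z"
    and nb: "\<not> is_boundary (ind_complex E T) m z"
    using assms(2) unfolding red_homology_nonzero_iff by blast
  have "is_chain (ind_complex E T) (Suc m) 0" unfolding is_chain_def by simp
  with nb have "z \<noteq> 0" unfolding is_boundary_def by force
  then obtain F where "z F \<noteq> 0" by (auto simp: fun_eq_iff)
  with z have "F \<subseteq> T" "card F = m" unfolding is_chain_def ind_complex_def by auto
  with fin show ?thesis using card_mono by blast
qed

section \<open>Link and deletion\<close>

definition closed_nbhd :: "('a \<Rightarrow> 'a \<Rightarrow> bool) \<Rightarrow> 'a \<Rightarrow> 'a set" where
  "closed_nbhd E x = insert x {v. E x v}"

lemma insert_ind_complex_iff: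
  assumes "x \<in> T" "x \<notin> \<rho>" "symp E" "irreflp E"
  shows "insert x \<rho> \<in> ind_complex E T \<longleftrightarrow> \<rho> \<in> ind_complex E (T - closed_nbhd E x)"
  using assms unfolding ind_complex_def closed_nbhd_def symp_def irreflp_def by auto

definition delete_chain :: "'a \<Rightarrow> ('a set \<Rightarrow> 'k::field) \<Rightarrow> 'a set \<Rightarrow> 'k" where
  "delete_chain x z \<sigma> = (if x \<in> \<sigma> then 0 else z \<sigma>)"

definition link_chain :: "'a::linorder \<Rightarrow> ('a set \<Rightarrow> 'k::field) \<Rightarrow> 'a set \<Rightarrow> 'k" where
  "link_chain x z \<rho> = (if x \<in> \<rho> then 0 else ins_sign x \<rho> * z (insert x \<rho>))"

lemma delete_plus_cone_link: "z = delete_chain x z + cone_chain x (link_chain x z)"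
  by (auto simp: fun_eq_iff delete_chain_def cone_chain_def link_chain_def insert_absorb mult.assoc[symmetric])

lemma is_chain_delete_chain:
  "is_chain (ind_complex E T) m z \<Longrightarrow> is_chain (ind_complex E (T - {x})) m (delete_chain x z)"
  unfolding is_chain_def delete_chain_def ind_complex_def by auto

lemma is_chain_link_chain:
  assumes fin: "finite T" and x: "x \<in> T" and E: "symp E" "irreflp E"
    and z: "is_chain (ind_complex E T) (Suc k) z"
  shows "is_chain (ind_complex E (T - closed_nbhd E x)) k (link_chain x z)"
  unfolding is_chain_def
proof (intro allI impI)
  fix \<rho> assume "link_chain x z \<rho> \<noteq> 0"
  then have x\<rho>: "x \<notin> \<rho>" and nz: "z (insert x \<rho>) \<noteq> 0" by (auto simp: link_chain_def split: if_splits)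
  with z have "insert x \<rho> \<in> ind_complex E T" "card (insert x \<rho>) = Suc k"
    unfolding is_chain_def by auto
  moreover have "finite \<rho>" using finite_ind_complex_face[OF fin calculation(1)] by simp
  ultimately show "\<rho> \<in> ind_complex E (T - closed_nbhd E x) \<and> card \<rho> = k"
    using insert_ind_complex_iff[OF x x\<rho> E] x\<rho> by simp
qed

text \<open>Splitting a cycle \<open>z\<close> as \<open>z\<^sub>0 + x * w\<close> with \<open>z\<^sub>0\<close> avoiding \<open>x\<close>, the identity
  \<open>0 = \<partial>z = \<partial>z\<^sub>0 + w - x * \<partial>w\<close> read on the faces containing \<open>x\<close> says that \<open>w\<close> is a cycle.\<close>

lemma boundary_link_delete:
  assumes fin: "finite T" and x: "x \<in> T" and E: "symp E" "irreflp E"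
    and z: "supported_on (ind_complex E T) z" and cyc: "boundary (ind_complex E T) z = 0"
  shows "boundary (ind_complex E (T - closed_nbhd E x)) (link_chain x z) = 0"
    and "boundary (ind_complex E T) (delete_chain x z) = - link_chain x z"
proof -
  let ?bd = "boundary (ind_complex E T)"
  let ?w = "link_chain x z"
  have w: "supported_on (ind_complex E (T - closed_nbhd E x)) ?w"
    using z insert_ind_complex_iff[OF x _ E]
    unfolding supported_on_def link_chain_def by (metis mult_zero_right)
  have wT: "supported_on (ind_complex E T) ?w"
    using w ind_complex_mono[of "T - closed_nbhd E x" T E] unfolding supported_on_def by blast
  have xw: "supported_on (ind_complex E T) (cone_chain x ?w)"
    using z unfolding supported_on_def cone_chain_def link_chain_def
    by (auto simp: insert_absorb mult.assoc[symmetric])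
  have dT: "supported_on (ind_complex E T) (delete_chain x z)"
    using z unfolding supported_on_def delete_chain_def by auto
  have "0 = ?bd (delete_chain x z) + (?w - cone_chain x (?bd ?w))"
    using cyc boundary_add[of "ind_complex E T" "delete_chain x z" "cone_chain x ?w"]
      boundary_cone_chain[OF fin x wT xw] delete_plus_cone_link[of z x] by simp
  then have eq: "?bd (delete_chain x z) = cone_chain x (?bd ?w) - ?w"
    by (simp add: algebra_simps eq_neg_iff_add_eq_0)
  have "?bd ?w \<rho> = 0" for \<rho>
  proof (cases "x \<in> \<rho>")
    case True
    then show ?thesis by (intro boundary_eq_0_if_avoiding[of x]) (auto simp: link_chain_def)
  next
    case False
    have "?bd (delete_chain x z) (insert x \<rho>) = 0"
      by (intro boundary_eq_0_if_avoiding[of x]) (auto simp: delete_chain_def)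
    with eq False show ?thesis by (simp add: fun_eq_iff link_chain_def)
  qed
  then have "?bd ?w = 0" by (simp add: fun_eq_iff)
  then show "boundary (ind_complex E (T - closed_nbhd E x)) ?w = 0"
    using boundary_ind_complex_mono[OF fin _ w] by auto
  show "?bd (delete_chain x z) = - ?w"
    using eq \<open>?bd ?w = 0\<close> by simp
qed

lemma link_chain_of_0_chain:
  assumes "finite T" "is_chain (ind_complex E T) 0 z"
  shows "link_chain x z = 0"
  using assms finite_ind_complex_face[OF assms(1)]
  unfolding is_chain_def link_chain_def by (fastforce simp: fun_eq_iff)

text \<open>If the link part \<open>w\<close> of \<open>z\<close> is the boundary of \<open>u\<close> in the link, then
  \<open>z + \<partial>(x * u) = z\<^sub>0 + u\<close> avoids \<open>x\<close>, and it bounds in the deletion only if \<open>z\<close> bounds in \<open>T\<close>.\<close>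

lemma deletion_red_homology_nonzero:
  fixes z :: "'a::linorder set \<Rightarrow> 'k::field"
  assumes fin: "finite T" and x: "x \<in> T" and E: "symp E" "irreflp E"
    and z: "is_chain (ind_complex E T) m z" and cyc: "boundary (ind_complex E T) z = 0"
    and nb: "\<not> is_boundary (ind_complex E T) m z"
    and u: "is_chain (ind_complex E (T - closed_nbhd E x)) m u"
    and bu: "boundary (ind_complex E (T - closed_nbhd E x)) u = link_chain x z"
  shows "red_homology_nonzero (K::'k itself) (ind_complex E (T - {x})) m"
proof -
  let ?bdT = "boundary (ind_complex E T)" and ?bdD = "boundary (ind_complex E (T - {x}))"
  let ?w = "link_chain x z" and ?z0 = "delete_chain x z"
  have LD: "T - closed_nbhd E x \<subseteq> T - {x}" by (auto simp: closed_nbhd_def)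
  have LT: "T - closed_nbhd E x \<subseteq> T" by auto
  have bdT_u: "?bdT u = ?w"
    using boundary_ind_complex_mono[OF fin LT is_chain_supported_on[OF u]] bu by simp
  define z' where "z' = ?z0 + u"
  have z': "is_chain (ind_complex E (T - {x})) m z'"
    unfolding z'_def
    by (intro is_chain_add is_chain_delete_chain[OF z] is_chain_mono[OF ind_complex_mono[OF LD] u])
  have "?bdD z' = ?bdT z'"
    using boundary_ind_complex_mono[OF fin _ is_chain_supported_on[OF z']] by auto
  also have "\<dots> = 0"
    using boundary_link_delete(2)[OF fin x E is_chain_supported_on[OF z] cyc] bdT_u
    by (simp add: z'_def boundary_add)
  finally have cyc': "?bdD z' = 0" .
  have "\<not> is_boundary (ind_complex E (T - {x})) m z'"
  proof
    assume "is_boundary (ind_complex E (T - {x})) m z'"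
    then obtain b' where b': "is_chain (ind_complex E (T - {x})) (Suc m) b'" and bb': "?bdD b' = z'"
      unfolding is_boundary_def by blast
    have xu: "is_chain (ind_complex E T) (Suc m) (cone_chain x u)"
      using is_chain_cone_chain[OF fin is_chain_mono[OF ind_complex_mono[OF LT] u]]
        u insert_ind_complex_iff[OF x _ E] unfolding is_chain_def by blast
    have b'T: "is_chain (ind_complex E T) (Suc m) b'"
      using b' ind_complex_mono[of "T - {x}" T] is_chain_mono by blast
    have "?bdT (b' - cone_chain x u) = ?bdD b' - (u - cone_chain x ?w)"
      using boundary_ind_complex_mono[OF fin _ is_chain_supported_on[OF b']]
        boundary_cone_chain[OF fin x is_chain_supported_on[OF is_chain_mono[OF ind_complex_mono[OF LT] u]]
          is_chain_supported_on[OF xu]] bdT_u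
      by (simp add: boundary_diff)
    also have "\<dots> = z"
      using bb' delete_plus_cone_link[of z x] by (simp add: z'_def)
    finally have "is_boundary (ind_complex E T) m z"
      using is_chain_diff[OF b'T xu] unfolding is_boundary_def by blast
    with nb show False ..
  qed
  with z' cyc' show ?thesis
    unfolding red_homology_nonzero_iff by blast
qed

lemma red_homology_nonzero_link_deletion:
  assumes fin: "finite T" and x: "x \<in> T" and E: "symp E" "irreflp E"
    and rh: "red_homology_nonzero (K::'k::field itself) (ind_complex E T) m"
  shows "red_homology_nonzero K (ind_complex E (T - {x})) m
     \<or> (\<exists>k. m = Suc k \<and> red_homology_nonzero K (ind_complex E (T - closed_nbhd E x)) k)"
proof -
  let ?\<Delta>L = "ind_complex E (T - closed_nbhd E x)"
  obtain z :: "'a set \<Rightarrow> 'k" where z: "is_chain (ind_complex E T) m z"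
    and cyc: "boundary (ind_complex E T) z = 0" and nb: "\<not> is_boundary (ind_complex E T) m z"
    using rh unfolding red_homology_nonzero_iff by blast
  have link_cycle: "boundary ?\<Delta>L (link_chain x z) = 0"
    by (rule boundary_link_delete(1)[OF fin x E is_chain_supported_on[OF z] cyc])
  consider (bounds) u where "is_chain ?\<Delta>L m u" "boundary ?\<Delta>L u = link_chain x z"
    | (link) k where "m = Suc k" "\<not> is_boundary ?\<Delta>L k (link_chain x z)"
  proof (cases m)
    case 0
    then show ?thesis
      using that(1)[of 0] link_chain_of_0_chain[OF fin] z unfolding is_chain_def by auto
  next
    case (Suc k)
    then show ?thesis using that unfolding is_boundary_def by blast
  qed
  then show ?thesis
  proof cases
    case bounds
    then show ?thesis using deletion_red_homology_nonzero[OF fin x E z cyc nb] by blast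
  next
    case link
    then have "red_homology_nonzero K ?\<Delta>L k"
      using is_chain_link_chain[OF fin x E] z link_cycle
      unfolding red_homology_nonzero_iff by blast
    with link show ?thesis by blast
  qed
qed

lemma dominated_vertex_link_red_homology_zero:
  assumes fin: "finite T" and E: "symp E" "irreflp E"
    and xy: "x \<in> T" "y \<in> T" "x \<noteq> y" and dom: "\<forall>v\<in>T. E y v \<longrightarrow> E x v"
  shows "\<not> red_homology_nonzero (K::'k::field itself) (ind_complex E (T - closed_nbhd E x)) k"
proof -
  have "\<not> E x y" using xy(1) dom sympD[OF E(1), of x y] irreflpD[OF E(2), of x] by blast
  then have y: "y \<in> T - closed_nbhd E x" using xy(2,3) by (auto simp: closed_nbhd_def)
  have "\<forall>v\<in>T - closed_nbhd E x. \<not> E y v \<and> \<not> E v y"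
  proof
    fix v assume "v \<in> T - closed_nbhd E x"
    then have "\<not> E y v" using dom by (auto simp: closed_nbhd_def)
    with sympD[OF E(1), of v y] show "\<not> E y v \<and> \<not> E v y" by blast
  qed
  then show ?thesis
    using isolated_vertex_red_homology_zero[where E = E, OF finite_Diff[OF fin] y irreflpD[OF E(2), of y]]
    by blast
qed

section \<open>Facet cycles and joins\<close>

definition facet :: "'a set set \<Rightarrow> 'a set \<Rightarrow> bool" where
  "facet \<Delta> F \<longleftrightarrow> F \<in> \<Delta> \<and> (\<forall>\<sigma>\<in>\<Delta>. F \<subseteq> \<sigma> \<longrightarrow> \<sigma> = F)"

definition facet_cycle :: "'a::linorder set set \<Rightarrow> nat \<Rightarrow> ('a set \<Rightarrow> 'k::field) \<Rightarrow> bool" where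
  "facet_cycle \<Delta> m z \<longleftrightarrow> is_chain \<Delta> m z \<and> boundary \<Delta> z = 0 \<and> (\<exists>F. facet \<Delta> F \<and> z F \<noteq> 0)"

text \<open>A boundary vanishes on every facet, which has no cofaces.\<close>

lemma facet_cycle_red_homology_nonzero:
  fixes z :: "'a::linorder set \<Rightarrow> 'k::field"
  assumes "facet_cycle \<Delta> m z"
  shows "red_homology_nonzero (K::'k itself) \<Delta> m"
proof -
  obtain F where F: "facet \<Delta> F" "z F \<noteq> 0" using assms unfolding facet_cycle_def by blast
  have no_cofaces: "{\<sigma>\<in>\<Delta>. F \<subseteq> \<sigma> \<and> card \<sigma> = Suc (card F)} = {}"
    using F(1) unfolding facet_def by auto
  have "boundary \<Delta> b F = 0" for b :: "'a set \<Rightarrow> 'k"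
    unfolding boundary_def no_cofaces by simp
  with F(2) have "\<not> is_boundary \<Delta> m z" unfolding is_boundary_def by metis
  with assms show ?thesis unfolding red_homology_nonzero_iff facet_cycle_def by blast
qed

lemma facet_ind_complex_iff:
  assumes "F \<in> ind_complex E T"
  shows "facet (ind_complex E T) F \<longleftrightarrow> (\<forall>v\<in>T - F. insert v F \<notin> ind_complex E T)"
proof
  assume "facet (ind_complex E T) F"
  then show "\<forall>v\<in>T - F. insert v F \<notin> ind_complex E T"
    unfolding facet_def by blast
next
  assume max: "\<forall>v\<in>T - F. insert v F \<notin> ind_complex E T"
  have "\<sigma> = F" if \<sigma>: "\<sigma> \<in> ind_complex E T" "F \<subseteq> \<sigma>" for \<sigma>
  proof (rule ccontr)
    assume "\<sigma> \<noteq> F"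
    then obtain v where "v \<in> \<sigma> - F" using \<sigma>(2) by blast
    with \<sigma> have "v \<in> T - F" "insert v F \<in> ind_complex E T"
      unfolding ind_complex_def by auto
    with max show False by blast
  qed
  with assms show "facet (ind_complex E T) F" unfolding facet_def by blast
qed

definition shuffle_sign :: "'a::linorder set \<Rightarrow> 'a set \<Rightarrow> 'k::field" where
  "shuffle_sign F1 F2 = (-1) ^ card {p\<in>F1 \<times> F2. snd p < fst p}"

lemma shuffle_sign_nonzero [simp]: "shuffle_sign F1 F2 \<noteq> (0::'k::field)"
  unfolding shuffle_sign_def by simp

lemma shuffle_sign_insert_left:
  assumes "finite F1" "finite F2" "v \<notin> F1"
  shows "shuffle_sign (insert v F1) F2 = ins_sign v F2 * (shuffle_sign F1 F2 :: 'k::field)"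
proof -
  have "{p\<in>insert v F1 \<times> F2. snd p < fst p} = {p\<in>F1 \<times> F2. snd p < fst p} \<union> Pair v ` {y\<in>F2. y < v}"
    by auto
  moreover have "card ({p\<in>F1 \<times> F2. snd p < fst p} \<union> Pair v ` {y\<in>F2. y < v}) =
      card {p\<in>F1 \<times> F2. snd p < fst p} + card {y\<in>F2. y < v}"
    using assms by (subst card_Un_disjoint) (auto simp: card_image inj_on_def)
  ultimately show ?thesis unfolding shuffle_sign_def ins_sign_def by (simp add: power_add)
qed

lemma shuffle_sign_insert_right:
  assumes "finite F1" "finite F2" "v \<notin> F2"
  shows "shuffle_sign F1 (insert v F2) = (-1) ^ card {x\<in>F1. v < x} * (shuffle_sign F1 F2 :: 'k::field)"
proof -
  have "{p\<in>F1 \<times> insert v F2. snd p < fst p} = {p\<in>F1 \<times> F2. snd p < fst p} \<union> (\<lambda>x. (x, v)) ` {x\<in>F1. v < x}"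
    by auto
  moreover have "card ({p\<in>F1 \<times> F2. snd p < fst p} \<union> (\<lambda>x. (x, v)) ` {x\<in>F1. v < x}) =
      card {p\<in>F1 \<times> F2. snd p < fst p} + card {x\<in>F1. v < x}"
    using assms by (subst card_Un_disjoint) (auto simp: card_image inj_on_def)
  ultimately show ?thesis unfolding shuffle_sign_def by (simp add: power_add)
qed

text \<open>The shuffle sign accounts for listing the vertices of \<open>\<sigma> \<inter> A\<close> before those of
  \<open>\<sigma> \<inter> B\<close>.\<close>

definition join_chain :: "'a::linorder set \<Rightarrow> 'a set \<Rightarrow> ('a set \<Rightarrow> 'k::field) \<Rightarrow> ('a set \<Rightarrow> 'k) \<Rightarrow> 'a set \<Rightarrow> 'k" where
  "join_chain A B z1 z2 \<sigma> =
     (if \<sigma> \<subseteq> A \<union> B then shuffle_sign (\<sigma> \<inter> A) (\<sigma> \<inter> B) * z1 (\<sigma> \<inter> A) * z2 (\<sigma> \<inter> B) else 0)"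

lemma ind_complex_Un:
  assumes "A \<inter> B = {}" and noE: "\<forall>a\<in>A. \<forall>b\<in>B. \<not> E a b \<and> \<not> E b a"
  shows "\<sigma> \<in> ind_complex E (A \<union> B) \<longleftrightarrow>
    \<sigma> \<subseteq> A \<union> B \<and> \<sigma> \<inter> A \<in> ind_complex E A \<and> \<sigma> \<inter> B \<in> ind_complex E B"
  using noE unfolding ind_complex_def by blast

lemma is_chain_join_chain:
  assumes fin: "finite A" "finite B" and AB: "A \<inter> B = {}" and noE: "\<forall>a\<in>A. \<forall>b\<in>B. \<not> E a b \<and> \<not> E b a"
    and z1: "is_chain (ind_complex E A) m1 z1" and z2: "is_chain (ind_complex E B) m2 z2"
  shows "is_chain (ind_complex E (A \<union> B)) (m1 + m2) (join_chain A B z1 z2)"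
  unfolding is_chain_def
proof (intro allI impI)
  fix \<sigma> assume "join_chain A B z1 z2 \<sigma> \<noteq> 0"
  then have \<sigma>: "\<sigma> \<subseteq> A \<union> B" "z1 (\<sigma> \<inter> A) \<noteq> 0" "z2 (\<sigma> \<inter> B) \<noteq> 0"
    unfolding join_chain_def by (auto split: if_splits)
  have "card ((\<sigma> \<inter> A) \<union> (\<sigma> \<inter> B)) = card (\<sigma> \<inter> A) + card (\<sigma> \<inter> B)"
    by (rule card_Un_disjoint) (use fin AB in auto)
  moreover have "(\<sigma> \<inter> A) \<union> (\<sigma> \<inter> B) = \<sigma>" using \<sigma>(1) by auto
  ultimately have "card \<sigma> = card (\<sigma> \<inter> A) + card (\<sigma> \<inter> B)" by simp
  with \<sigma> z1 z2 show "\<sigma> \<in> ind_complex E (A \<union> B) \<and> card \<sigma> = m1 + m2"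
    unfolding is_chain_def ind_complex_Un[OF AB noE] by auto
qed

lemma join_chain_coface_left:
  fixes z1 z2 :: "'a::linorder set \<Rightarrow> 'k::field"
  assumes fin: "finite A" "finite B" and AB: "A \<inter> B = {}" and \<tau>: "\<tau>1 \<subseteq> A" "\<tau>2 \<subseteq> B"
    and v: "v \<in> A - \<tau>1"
  shows "ins_sign v (\<tau>1 \<union> \<tau>2) * join_chain A B z1 z2 (insert v (\<tau>1 \<union> \<tau>2))
    = shuffle_sign \<tau>1 \<tau>2 * z2 \<tau>2 * (ins_sign v \<tau>1 * z1 (insert v \<tau>1))"
proof -
  have f: "finite \<tau>1" "finite \<tau>2"
    using finite_subset[OF \<tau>(1) fin(1)] finite_subset[OF \<tau>(2) fin(2)] .
  have d: "\<tau>1 \<inter> \<tau>2 = {}" using \<tau> AB by blast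
  have "insert v (\<tau>1 \<union> \<tau>2) \<inter> A = insert v \<tau>1" "insert v (\<tau>1 \<union> \<tau>2) \<inter> B = \<tau>2"
    "insert v (\<tau>1 \<union> \<tau>2) \<subseteq> A \<union> B"
    using \<tau> v AB by auto
  then have "join_chain A B z1 z2 (insert v (\<tau>1 \<union> \<tau>2))
      = ins_sign v \<tau>2 * shuffle_sign \<tau>1 \<tau>2 * z1 (insert v \<tau>1) * z2 \<tau>2"
    using v by (simp add: join_chain_def shuffle_sign_insert_left[OF f])
  then show ?thesis by (simp add: ins_sign_Un[OF f d] mult_ac)
qed

lemma join_chain_coface_right:
  fixes z1 z2 :: "'a::linorder set \<Rightarrow> 'k::field"
  assumes fin: "finite A" "finite B" and AB: "A \<inter> B = {}" and \<tau>: "\<tau>1 \<subseteq> A" "\<tau>2 \<subseteq> B"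
    and v: "v \<in> B - \<tau>2"
  shows "ins_sign v (\<tau>1 \<union> \<tau>2) * join_chain A B z1 z2 (insert v (\<tau>1 \<union> \<tau>2))
    = shuffle_sign \<tau>1 \<tau>2 * (-1) ^ card \<tau>1 * z1 \<tau>1 * (ins_sign v \<tau>2 * z2 (insert v \<tau>2))"
proof -
  have f: "finite \<tau>1" "finite \<tau>2"
    using finite_subset[OF \<tau>(1) fin(1)] finite_subset[OF \<tau>(2) fin(2)] .
  have d: "\<tau>1 \<inter> \<tau>2 = {}" using \<tau> AB by blast
  have v1: "v \<notin> \<tau>1" using \<tau> v AB by blast
  have "insert v (\<tau>1 \<union> \<tau>2) \<inter> A = \<tau>1" "insert v (\<tau>1 \<union> \<tau>2) \<inter> B = insert v \<tau>2"
    "insert v (\<tau>1 \<union> \<tau>2) \<subseteq> A \<union> B"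
    using \<tau> v AB by auto
  then have "join_chain A B z1 z2 (insert v (\<tau>1 \<union> \<tau>2))
      = (-1) ^ card {x\<in>\<tau>1. v < x} * shuffle_sign \<tau>1 \<tau>2 * z1 \<tau>1 * z2 (insert v \<tau>2)"
    using v by (simp add: join_chain_def shuffle_sign_insert_right[OF f])
  then have "ins_sign v (\<tau>1 \<union> \<tau>2) * join_chain A B z1 z2 (insert v (\<tau>1 \<union> \<tau>2))
      = (ins_sign v \<tau>1 * (-1) ^ card {x\<in>\<tau>1. v < x}) * shuffle_sign \<tau>1 \<tau>2 * z1 \<tau>1
        * (ins_sign v \<tau>2 * z2 (insert v \<tau>2))"
    by (simp add: ins_sign_Un[OF f d] mult_ac)
  then show ?thesis by (simp add: ins_sign_mult_greater[OF f(1) v1] mult_ac)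
qed

lemma boundary_join_chain:
  fixes z1 z2 :: "'a::linorder set \<Rightarrow> 'k::field"
  assumes finA: "finite A" and finB: "finite B" and AB: "A \<inter> B = {}"
    and noE: "\<forall>a\<in>A. \<forall>b\<in>B. \<not> E a b \<and> \<not> E b a"
    and z1: "supported_on (ind_complex E A) z1" and z2: "supported_on (ind_complex E B) z2"
    and \<tau>: "\<tau> \<subseteq> A \<union> B"
  shows "boundary (ind_complex E (A \<union> B)) (join_chain A B z1 z2) \<tau> =
    shuffle_sign (\<tau> \<inter> A) (\<tau> \<inter> B) * (boundary (ind_complex E A) z1 (\<tau> \<inter> A) * z2 (\<tau> \<inter> B)
      + (-1) ^ card (\<tau> \<inter> A) * z1 (\<tau> \<inter> A) * boundary (ind_complex E B) z2 (\<tau> \<inter> B))"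
proof -
  define \<tau>1 \<tau>2 where "\<tau>1 = \<tau> \<inter> A" and "\<tau>2 = \<tau> \<inter> B"
  let ?J = "join_chain A B z1 z2" and ?s = "shuffle_sign \<tau>1 \<tau>2"
  have \<tau>12: "\<tau> = \<tau>1 \<union> \<tau>2" and sub: "\<tau>1 \<subseteq> A" "\<tau>2 \<subseteq> B" using \<tau> by (auto simp: \<tau>1_def \<tau>2_def)
  have J: "supported_on (ind_complex E (A \<union> B)) ?J"
    using z1 z2 unfolding supported_on_def join_chain_def ind_complex_Un[OF AB noE]
    by (auto split: if_splits)
  have split: "(A \<union> B) - \<tau> = (A - \<tau>1) \<union> (B - \<tau>2)" using AB by (auto simp: \<tau>1_def \<tau>2_def)
  have "boundary (ind_complex E (A \<union> B)) ?J \<tau>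
      = (\<Sum>v\<in>A - \<tau>1. ins_sign v \<tau> * ?J (insert v \<tau>)) + (\<Sum>v\<in>B - \<tau>2. ins_sign v \<tau> * ?J (insert v \<tau>))"
    unfolding boundary_ind_complex[OF finite_UnI[OF finA finB] J] split
    by (rule sum.union_disjoint) (use finA finB AB in auto)
  also have "\<dots> = (\<Sum>v\<in>A - \<tau>1. ?s * z2 \<tau>2 * (ins_sign v \<tau>1 * z1 (insert v \<tau>1)))
      + (\<Sum>v\<in>B - \<tau>2. ?s * (-1) ^ card \<tau>1 * z1 \<tau>1 * (ins_sign v \<tau>2 * z2 (insert v \<tau>2)))"
    unfolding \<tau>12
    by (simp only: sum.cong[OF refl join_chain_coface_left[OF finA finB AB sub]]
        sum.cong[OF refl join_chain_coface_right[OF finA finB AB sub]])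
  also have "\<dots> = ?s * z2 \<tau>2 * boundary (ind_complex E A) z1 \<tau>1
      + ?s * (-1) ^ card \<tau>1 * z1 \<tau>1 * boundary (ind_complex E B) z2 \<tau>2"
    by (simp only: boundary_ind_complex[OF finA z1] boundary_ind_complex[OF finB z2] sum_distrib_left)
  finally show ?thesis
    by (simp add: \<tau>1_def[symmetric] \<tau>2_def[symmetric] algebra_simps)
qed

lemma facet_ind_complex_Un:
  assumes AB: "A \<inter> B = {}" and noE: "\<forall>a\<in>A. \<forall>b\<in>B. \<not> E a b \<and> \<not> E b a"
    and F1: "facet (ind_complex E A) F1" and F2: "facet (ind_complex E B) F2"
  shows "facet (ind_complex E (A \<union> B)) (F1 \<union> F2)"
proof -
  have F: "F1 \<in> ind_complex E A" "F2 \<in> ind_complex E B" using F1 F2 unfolding facet_def by auto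
  then have sub: "F1 \<subseteq> A" "F2 \<subseteq> B" unfolding ind_complex_def by auto
  then have cap: "(F1 \<union> F2) \<inter> A = F1" "(F1 \<union> F2) \<inter> B = F2" using AB by auto
  have "\<sigma> = F1 \<union> F2" if "\<sigma> \<in> ind_complex E (A \<union> B)" "F1 \<union> F2 \<subseteq> \<sigma>" for \<sigma>
  proof -
    from that(1) have \<sigma>: "\<sigma> \<subseteq> A \<union> B" "\<sigma> \<inter> A \<in> ind_complex E A" "\<sigma> \<inter> B \<in> ind_complex E B"
      unfolding ind_complex_Un[OF AB noE] by auto
    have "F1 \<subseteq> \<sigma> \<inter> A" "F2 \<subseteq> \<sigma> \<inter> B" using that(2) sub by auto
    with F1 F2 \<sigma>(2,3) have "\<sigma> \<inter> A = F1" "\<sigma> \<inter> B = F2" unfolding facet_def by auto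
    moreover have "\<sigma> = (\<sigma> \<inter> A) \<union> (\<sigma> \<inter> B)" using \<sigma>(1) by auto
    ultimately show ?thesis by simp
  qed
  moreover have "F1 \<union> F2 \<in> ind_complex E (A \<union> B)"
    unfolding ind_complex_Un[OF AB noE] cap using sub F by auto
  ultimately show ?thesis unfolding facet_def by blast
qed

lemma facet_cycle_join_chain:
  assumes finA: "finite A" and finB: "finite B" and AB: "A \<inter> B = {}"
    and noE: "\<forall>a\<in>A. \<forall>b\<in>B. \<not> E a b \<and> \<not> E b a"
    and z1: "facet_cycle (ind_complex E A) m1 z1" and z2: "facet_cycle (ind_complex E B) m2 z2"
  shows "facet_cycle (ind_complex E (A \<union> B)) (m1 + m2) (join_chain A B z1 z2)"
proof -
  have c1: "is_chain (ind_complex E A) m1 z1" "boundary (ind_complex E A) z1 = 0"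
    and c2: "is_chain (ind_complex E B) m2 z2" "boundary (ind_complex E B) z2 = 0"
    using z1 z2 unfolding facet_cycle_def by auto
  have J: "is_chain (ind_complex E (A \<union> B)) (m1 + m2) (join_chain A B z1 z2)"
    by (rule is_chain_join_chain[OF finA finB AB noE c1(1) c2(1)])
  have "boundary (ind_complex E (A \<union> B)) (join_chain A B z1 z2) \<tau> = 0" for \<tau>
  proof (cases "\<tau> \<subseteq> A \<union> B")
    case True
    then show ?thesis
      using boundary_join_chain[OF finA finB AB noE is_chain_supported_on[OF c1(1)]
          is_chain_supported_on[OF c2(1)]] c1(2) c2(2) by simp
  next
    case False
    then show ?thesis
      using finA finB by (simp add: boundary_ind_complex[OF _ is_chain_supported_on[OF J]] join_chain_def)
  qed
  moreover obtain F1 F2 where F1: "facet (ind_complex E A) F1" "z1 F1 \<noteq> 0"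
    and F2: "facet (ind_complex E B) F2" "z2 F2 \<noteq> 0"
    using z1 z2 unfolding facet_cycle_def by blast
  moreover have "facet (ind_complex E (A \<union> B)) (F1 \<union> F2)"
    by (rule facet_ind_complex_Un[OF AB noE F1(1) F2(1)])
  moreover have "join_chain A B z1 z2 (F1 \<union> F2) \<noteq> 0"
  proof -
    have "F1 \<subseteq> A" "F2 \<subseteq> B" using F1(1) F2(1) unfolding facet_def ind_complex_def by auto
    then have "(F1 \<union> F2) \<inter> A = F1" "(F1 \<union> F2) \<inter> B = F2" using AB by auto
    with \<open>F1 \<subseteq> A\<close> \<open>F2 \<subseteq> B\<close> F1(2) F2(2) show ?thesis unfolding join_chain_def by auto
  qed
  ultimately show ?thesis unfolding facet_cycle_def using J by (auto simp: fun_eq_iff)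
qed

section \<open>Edges and pentagons\<close>

text \<open>Vertices and edges are iterated cones over the empty face, so their boundaries follow from
  the cone formula.\<close>

definition empty_chain :: "'a set \<Rightarrow> 'k::field" where
  "empty_chain \<sigma> = (if \<sigma> = {} then 1 else 0)"

lemma is_chain_empty_chain: "{} \<in> \<Delta> \<Longrightarrow> is_chain \<Delta> 0 empty_chain"
  unfolding is_chain_def empty_chain_def by simp

lemma facet_cycle_empty: "facet_cycle (ind_complex E {}) 0 empty_chain"
proof -
  have \<Delta>: "ind_complex E {} = {{}}" unfolding ind_complex_def by auto
  have "is_chain {{}} 0 empty_chain" by (rule is_chain_empty_chain) simp
  moreover have "facet {{}} {}" unfolding facet_def by simp
  ultimately show ?thesis
    unfolding facet_cycle_def \<Delta> using boundary_0_chain by (fastforce simp: empty_chain_def)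
qed

lemma cone_chain_empty_chain:
  "cone_chain v empty_chain \<sigma> = (if \<sigma> = {v} then 1 else 0)"
proof (cases "v \<in> \<sigma>")
  case True
  then have "\<sigma> - {v} = {} \<longleftrightarrow> \<sigma> = {v}" by blast
  with True show ?thesis by (simp add: cone_chain_def empty_chain_def)
next
  case False
  then show ?thesis by (auto simp: cone_chain_def)
qed

lemma cone_cone_chain_empty_chain:
  "cone_chain p (cone_chain q empty_chain) \<sigma> = (if \<sigma> = {p, q} \<and> p \<noteq> q then ins_sign p {q} else 0)"
proof (cases "p \<in> \<sigma>")
  case True
  then have "\<sigma> - {p} = {q} \<longleftrightarrow> \<sigma> = {p, q} \<and> p \<noteq> q" by blast
  with True show ?thesis by (simp add: cone_chain_def[of p] cone_chain_empty_chain)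
next
  case False
  then show ?thesis by (auto simp: cone_chain_def)
qed

lemma boundary_vertex_chain:
  assumes "finite T" "{v} \<in> ind_complex E T"
  shows "boundary (ind_complex E T) (cone_chain v empty_chain) = empty_chain"
proof -
  have empty: "is_chain (ind_complex E T) 0 empty_chain"
    using assms(2) by (intro is_chain_empty_chain) (auto simp: ind_complex_def)
  have "supported_on (ind_complex E T) (cone_chain v empty_chain)"
    using assms(2) unfolding supported_on_def cone_chain_empty_chain by auto
  moreover have "v \<in> T" using assms(2) by (auto simp: ind_complex_def)
  ultimately have "boundary (ind_complex E T) (cone_chain v empty_chain)
      = empty_chain - cone_chain v (boundary (ind_complex E T) empty_chain)"
    using boundary_cone_chain[OF assms(1) _ is_chain_supported_on[OF empty]] by blast
  with boundary_0_chain[OF empty] show ?thesis by (metis cone_chain_zero diff_zero)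
qed

lemma is_chain_edge_chain:
  assumes "{p, q} \<in> \<Delta>" "p \<noteq> q"
  shows "is_chain \<Delta> 2 (cone_chain p (cone_chain q empty_chain))"
  using assms unfolding is_chain_def cone_cone_chain_empty_chain by auto

lemma boundary_edge_chain:
  assumes fin: "finite T" and pq: "{p, q} \<in> ind_complex E T" "p \<noteq> q"
  shows "boundary (ind_complex E T) (cone_chain p (cone_chain q empty_chain))
    = cone_chain q empty_chain - cone_chain p empty_chain"
proof -
  have q: "{q} \<in> ind_complex E T" and p: "p \<in> T" using pq unfolding ind_complex_def by auto
  have "supported_on (ind_complex E T) (cone_chain q empty_chain)"
    using q unfolding supported_on_def cone_chain_empty_chain by auto
  from boundary_cone_chain[OF fin p this is_chain_supported_on[OF is_chain_edge_chain[OF pq]]]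
  show ?thesis by (simp add: boundary_vertex_chain[OF fin q])
qed

lemma facet_cycle_K2:
  assumes "E a b" "a \<noteq> b" "\<not> E a a" "\<not> E b b"
  shows "facet_cycle (ind_complex E {a, b}) 1 (cone_chain a empty_chain - cone_chain b empty_chain)"
proof -
  have faces: "{a} \<in> ind_complex E {a, b}" "{b} \<in> ind_complex E {a, b}"
    using assms unfolding ind_complex_def by auto
  have "facet (ind_complex E {a, b}) {a}"
    using faces assms by (subst facet_ind_complex_iff) (auto simp: ind_complex_def)
  moreover have "is_chain (ind_complex E {a, b}) 1 (cone_chain a empty_chain - cone_chain b empty_chain)"
    using faces unfolding is_chain_def by (auto simp: cone_chain_empty_chain)
  ultimately show ?thesis
    unfolding facet_cycle_def using assms(2)
    by (auto simp: boundary_diff boundary_vertex_chain[OF _ faces(1)] boundary_vertex_chain[OF _ faces(2)]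
        cone_chain_empty_chain intro!: exI[of _ "{a}"])
qed

definition pentagon :: "('a \<Rightarrow> 'a \<Rightarrow> bool) \<Rightarrow> 'a \<Rightarrow> 'a \<Rightarrow> 'a \<Rightarrow> 'a \<Rightarrow> 'a \<Rightarrow> bool" where
  "pentagon E c0 c1 c2 c3 c4 \<longleftrightarrow> E c0 c1 \<and> E c1 c2 \<and> E c2 c3 \<and> E c3 c4 \<and> E c4 c0
     \<and> \<not> E c0 c2 \<and> \<not> E c1 c3 \<and> \<not> E c2 c4 \<and> \<not> E c3 c0 \<and> \<not> E c4 c1"

lemma induced_C5_pentagon:
  assumes "induced_C5 E W"
  obtains c0 c1 c2 c3 c4
  where "W = {c0, c1, c2, c3, c4}" "distinct [c0, c1, c2, c3, c4]" "pentagon E c0 c1 c2 c3 c4"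
proof -
  obtain f :: "nat \<Rightarrow> 'a" where f: "bij_betw f {0..<5} W"
    and adj: "\<And>i j. i < 5 \<Longrightarrow> j < 5 \<Longrightarrow> E (f i) (f j) \<longleftrightarrow> (j = (i + 1) mod 5 \<or> i = (j + 1) mod 5)"
    using assms unfolding induced_C5_def by blast
  have upt5: "[0..<5] = [0, 1, 2, 3, 4::nat]" by (simp add: upt_rec)
  have "distinct (map f [0..<5])" using f by (simp add: distinct_map bij_betw_def)
  moreover have "W = set (map f [0..<5])" using f by (simp add: bij_betw_def)
  moreover have "pentagon E (f 0) (f 1) (f 2) (f 3) (f 4)"
    unfolding pentagon_def
    using adj[of 0 1] adj[of 1 2] adj[of 2 3] adj[of 3 4] adj[of 4 0]
      adj[of 0 2] adj[of 1 3] adj[of 2 4] adj[of 3 0] adj[of 4 1] by simp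
  ultimately show thesis using that unfolding upt5 by simp
qed

lemma pentagon_distinct:
  assumes "symp E" "irreflp E" "pentagon E c0 c1 c2 c3 c4"
  shows "distinct [c0, c1, c2, c3, c4]"
  using assms unfolding pentagon_def symp_def irreflp_def by auto

lemma pentagon_induced_C5:
  assumes E: "symp E" "irreflp E" and c: "pentagon E c0 c1 c2 c3 c4"
  shows "induced_C5 E {c0, c1, c2, c3, c4}"
  unfolding induced_C5_def
proof (intro exI conjI)
  let ?f = "(!) [c0, c1, c2, c3, c4]"
  show "bij_betw ?f {0..<5} {c0, c1, c2, c3, c4}"
    by (rule bij_betw_nth[OF pentagon_distinct[OF E c]]) auto
  have less5: "i < 5 \<longleftrightarrow> i \<in> {0, 1, 2, 3, 4}" for i :: nat by auto
  show "\<forall>i<5. \<forall>j<5. E (?f i) (?f j) \<longleftrightarrow> (j = (i + 1) mod 5 \<or> i = (j + 1) mod 5)"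
    unfolding less5 using c E unfolding pentagon_def symp_def irreflp_def by auto
qed

lemma pentagon_rotate: "pentagon E c0 c1 c2 c3 c4 \<Longrightarrow> pentagon E c1 c2 c3 c4 c0"
  unfolding pentagon_def by auto

lemma pentagon_reflect: "symp E \<Longrightarrow> pentagon E c0 c1 c2 c3 c4 \<Longrightarrow> pentagon E c0 c4 c3 c2 c1"
  unfolding pentagon_def symp_def by blast

lemma induced_C5_two_nbrs:
  assumes "induced_C5 E W" "w \<in> W" "symp E"
  obtains p q where "p \<in> W" "q \<in> W" "p \<noteq> q" "E w p" "E w q"
proof -
  obtain c0 c1 c2 c3 c4 where W: "W = {c0, c1, c2, c3, c4}" and d: "distinct [c0, c1, c2, c3, c4]"
    and c: "pentagon E c0 c1 c2 c3 c4"
    using induced_C5_pentagon[OF assms(1)] by blast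
  from assms(2) W consider "w = c0" | "w = c1" | "w = c2" | "w = c3" | "w = c4" by blast
  then show thesis
  proof cases
    case 1 then show thesis using that[of c1 c4] c d W assms(3) unfolding pentagon_def symp_def by auto
  next
    case 2 then show thesis using that[of c2 c0] c d W assms(3) unfolding pentagon_def symp_def by auto
  next
    case 3 then show thesis using that[of c3 c1] c d W assms(3) unfolding pentagon_def symp_def by auto
  next
    case 4 then show thesis using that[of c4 c2] c d W assms(3) unfolding pentagon_def symp_def by auto
  next
    case 5 then show thesis using that[of c0 c3] c d W assms(3) unfolding pentagon_def symp_def by auto
  qed
qed

lemma card_induced_C5: "induced_C5 E W \<Longrightarrow> card W = 5"
  unfolding induced_C5_def by (auto dest: bij_betw_same_card)

lemma card_induced_K2: "induced_K2 E W \<Longrightarrow> card W = 2"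
  unfolding induced_K2_def by auto

text \<open>The independence complex of the pentagon \<open>c\<^sub>0 \<dots> c\<^sub>4\<close> is the pentagon
  \<open>c\<^sub>0 c\<^sub>2 c\<^sub>4 c\<^sub>1 c\<^sub>3\<close>; its fundamental cycle contains the facet \<open>{c\<^sub>0, c\<^sub>2}\<close>.\<close>

lemma facet_cycle_C5:
  assumes C5: "induced_C5 E W" and E: "symp E" "irreflp E"
  shows "\<exists>z::'a::linorder set \<Rightarrow> 'k::field. facet_cycle (ind_complex E W) 2 z"
proof -
  obtain c0 c1 c2 c3 c4 where W: "W = {c0, c1, c2, c3, c4}" and d: "distinct [c0, c1, c2, c3, c4]"
    and c: "pentagon E c0 c1 c2 c3 c4"
    using induced_C5_pentagon[OF C5] by blast
  let ?e = "\<lambda>p q. cone_chain p (cone_chain q empty_chain) :: 'a set \<Rightarrow> 'k"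
  have f02: "{c0, c2} \<in> ind_complex E W" and f24: "{c2, c4} \<in> ind_complex E W"
    and f41: "{c4, c1} \<in> ind_complex E W" and f13: "{c1, c3} \<in> ind_complex E W"
    and f30: "{c3, c0} \<in> ind_complex E W"
    using c E unfolding W ind_complex_def pentagon_def symp_def irreflp_def by auto
  define z where "z = ?e c0 c2 + ?e c2 c4 + ?e c4 c1 + ?e c1 c3 + ?e c3 c0"
  have "is_chain (ind_complex E W) 2 z"
    unfolding z_def using d f02 f24 f41 f13 f30 by (intro is_chain_add is_chain_edge_chain) auto
  moreover have "boundary (ind_complex E W) z = 0"
  proof -
    have fin: "finite W" and n: "c0 \<noteq> c2" "c2 \<noteq> c4" "c4 \<noteq> c1" "c1 \<noteq> c3" "c3 \<noteq> c0"
      using d W by auto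
    show ?thesis
      unfolding z_def
      by (simp add: boundary_add boundary_edge_chain[OF fin f02 n(1)] boundary_edge_chain[OF fin f24 n(2)]
          boundary_edge_chain[OF fin f41 n(3)] boundary_edge_chain[OF fin f13 n(4)]
          boundary_edge_chain[OF fin f30 n(5)])
  qed
  moreover have "facet (ind_complex E W) {c0, c2}"
    using c W E f02 unfolding facet_ind_complex_iff[OF f02]
    by (auto simp: ind_complex_def pentagon_def symp_def)
  moreover have "z {c0, c2} \<noteq> 0"
    using d unfolding z_def by (auto simp: cone_cone_chain_empty_chain doubleton_eq_iff)
  ultimately show ?thesis unfolding facet_cycle_def by blast
qed

section \<open>Admissible families\<close>

lemma admissible_family_member:
  assumes "admissible_family V E \<H>" "W \<in> \<H>"
  shows "W \<subseteq> V" "induced_K2 E W \<or> induced_C5 E W"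
proof -
  have "\<forall>W\<in>\<H>. W \<subseteq> V \<and> (induced_K2 E W \<or> induced_C5 E W)"
    using assms(1) unfolding admissible_family_def by (rule conjunct1)
  with assms(2) show "W \<subseteq> V" "induced_K2 E W \<or> induced_C5 E W" by blast+
qed

lemma admissible_family_finite: "finite V \<Longrightarrow> admissible_family V E \<H> \<Longrightarrow> finite \<H>"
  unfolding admissible_family_def by (rule finite_subset[of _ "Pow V"]) auto

lemma admissible_family_subset: "admissible_family V E \<H> \<Longrightarrow> \<H>' \<subseteq> \<H> \<Longrightarrow> admissible_family V E \<H>'"
  unfolding admissible_family_def by blast

lemma admissible_family_mono: "admissible_family S E \<H> \<Longrightarrow> S \<subseteq> T \<Longrightarrow> admissible_family T E \<H>"
  unfolding admissible_family_def by blast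

lemma admissible_family_empty: "admissible_family V E {}"
  unfolding admissible_family_def by simp

lemma admissible_family_restrict:
  assumes adm: "admissible_family S E \<H>" and sub: "\<forall>W\<in>\<H>. W \<subseteq> S'"
  shows "admissible_family S' E \<H>"
  unfolding admissible_family_def
proof (rule conjI)
  show "\<forall>W\<in>\<H>. W \<subseteq> S' \<and> (induced_K2 E W \<or> induced_C5 E W)"
    using admissible_family_member[OF adm] sub by blast
  show "\<forall>W1\<in>\<H>. \<forall>W2\<in>\<H>. W1 \<noteq> W2 \<longrightarrow> W1 \<inter> W2 = {} \<and> (\<forall>x\<in>W1. \<forall>y\<in>W2. \<not> E x y)"
    using adm unfolding admissible_family_def by (rule conjunct2)
qed

lemma admissible_family_insert:
  assumes "admissible_family S E \<H>" "S \<subseteq> T" "W \<subseteq> T" "induced_K2 E W \<or> induced_C5 E W"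
    and "W \<inter> S = {}" and "\<forall>a\<in>W. \<forall>b\<in>S. \<not> E a b \<and> \<not> E b a"
  shows "admissible_family T E (insert W \<H>)"
proof -
  have H: "\<forall>W'\<in>\<H>. W' \<subseteq> S \<and> (induced_K2 E W' \<or> induced_C5 E W')"
    and P: "\<forall>W1\<in>\<H>. \<forall>W2\<in>\<H>. W1 \<noteq> W2 \<longrightarrow> W1 \<inter> W2 = {} \<and> (\<forall>x\<in>W1. \<forall>y\<in>W2. \<not> E x y)"
    using assms(1) unfolding admissible_family_def by auto
  have sep: "W \<inter> W' = {} \<and> (\<forall>x\<in>W. \<forall>y\<in>W'. \<not> E x y) \<and> (\<forall>x\<in>W'. \<forall>y\<in>W. \<not> E x y)"
    if "W' \<in> \<H>" for W'
  proof -
    have "W' \<subseteq> S" using H that by blast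
    with assms(5,6) show ?thesis by blast
  qed
  show ?thesis unfolding admissible_family_def
  proof (intro conjI)
    show "\<forall>W'\<in>insert W \<H>. W' \<subseteq> T \<and> (induced_K2 E W' \<or> induced_C5 E W')"
      using H assms(2-4) by auto
    show "\<forall>W1\<in>insert W \<H>. \<forall>W2\<in>insert W \<H>. W1 \<noteq> W2 \<longrightarrow> W1 \<inter> W2 = {} \<and> (\<forall>x\<in>W1. \<forall>y\<in>W2. \<not> E x y)"
    proof (intro ballI impI)
      fix W1 W2 assume W12: "W1 \<in> insert W \<H>" "W2 \<in> insert W \<H>" "W1 \<noteq> W2"
      then consider "W1 = W" "W2 \<in> \<H>" | "W2 = W" "W1 \<in> \<H>" | "W1 \<in> \<H>" "W2 \<in> \<H>" by auto
      then show "W1 \<inter> W2 = {} \<and> (\<forall>x\<in>W1. \<forall>y\<in>W2. \<not> E x y)"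
      proof cases
        case 1 then show ?thesis using sep by blast
      next
        case 2 then show ?thesis using sep by blast
      next
        case 3 then show ?thesis using P W12(3) by blast
      qed
    qed
  qed
qed

lemma family_value_empty [simp]: "family_value E {} = 0"
  unfolding family_value_def by simp

lemma family_value_insert:
  assumes fin: "finite \<H>" and W: "W \<notin> \<H>" and p: "induced_K2 E W \<or> induced_C5 E W"
  shows "family_value E (insert W \<H>) = (if induced_K2 E W then 1 else 2) + family_value E \<H>"
proof -
  have fin': "finite {V\<in>\<H>. induced_K2 E V}" "finite {V\<in>\<H>. induced_C5 E V}" using fin by auto
  show ?thesis
  proof (cases "induced_K2 E W")
    case True
    then have "\<not> induced_C5 E W" using card_induced_K2 card_induced_C5 by force
    with True have "{V\<in>insert W \<H>. induced_K2 E V} = insert W {V\<in>\<H>. induced_K2 E V}"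
      "{V\<in>insert W \<H>. induced_C5 E V} = {V\<in>\<H>. induced_C5 E V}" by auto
    with True W fin' show ?thesis unfolding family_value_def by simp
  next
    case False
    with p have "{V\<in>insert W \<H>. induced_K2 E V} = {V\<in>\<H>. induced_K2 E V}"
      "{V\<in>insert W \<H>. induced_C5 E V} = insert W {V\<in>\<H>. induced_C5 E V}" by auto
    with False W fin' show ?thesis unfolding family_value_def by simp
  qed
qed

lemma facet_cycle_K2_or_C5:
  assumes "induced_K2 E W \<or> induced_C5 E W" and E: "symp E" "irreflp E"
  shows "\<exists>z::'a::linorder set \<Rightarrow> 'k::field.
    facet_cycle (ind_complex E W) (if induced_K2 E W then 1 else 2) z"
proof (cases "induced_K2 E W")
  case True
  then obtain a b where W: "W = {a, b}" "a \<noteq> b" "E a b" unfolding induced_K2_def by blast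
  have "facet_cycle (ind_complex E {a, b}) 1 (cone_chain a empty_chain - cone_chain b empty_chain :: _ \<Rightarrow> 'k)"
    using W E(2) by (intro facet_cycle_K2) (auto simp: irreflp_def)
  with True W show ?thesis by auto
next
  case False
  with assms show ?thesis using facet_cycle_C5[OF _ E] by auto
qed

lemma admissible_family_facet_cycle:
  assumes finV: "finite V" and E: "symp E" "irreflp E" and adm: "admissible_family V E \<H>"
  shows "\<exists>z::'a::linorder set \<Rightarrow> 'k::field. facet_cycle (ind_complex E (\<Union>\<H>)) (family_value E \<H>) z"
  using admissible_family_finite[OF finV adm] adm
proof (induction \<H> rule: finite_induct)
  case empty
  show ?case using facet_cycle_empty by auto
next
  case (insert W \<H>)
  have admH: "admissible_family V E \<H>"
    using admissible_family_subset[OF insert.prems] by blast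
  then obtain z where z: "facet_cycle (ind_complex E (\<Union>\<H>)) (family_value E \<H>) (z :: 'a set \<Rightarrow> 'k)"
    using insert.IH by blast
  have W: "induced_K2 E W \<or> induced_C5 E W" "W \<subseteq> V"
    using insert.prems unfolding admissible_family_def by auto
  obtain zW where zW: "facet_cycle (ind_complex E W) (if induced_K2 E W then 1 else 2) (zW :: 'a set \<Rightarrow> 'k)"
    using facet_cycle_K2_or_C5[OF W(1) E] by blast
  have "\<Union>\<H> \<subseteq> V" using admH unfolding admissible_family_def by auto
  then have fin: "finite W" "finite (\<Union>\<H>)" using W(2) finV by (auto intro: finite_subset)
  have P: "\<forall>W1\<in>insert W \<H>. \<forall>W2\<in>insert W \<H>. W1 \<noteq> W2 \<longrightarrow> W1 \<inter> W2 = {} \<and> (\<forall>x\<in>W1. \<forall>y\<in>W2. \<not> E x y)"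
    using insert.prems unfolding admissible_family_def by blast
  have "W \<inter> W' = {} \<and> (\<forall>a\<in>W. \<forall>b\<in>W'. \<not> E a b \<and> \<not> E b a)" if "W' \<in> \<H>" for W'
  proof -
    have "W \<noteq> W'" using that insert.hyps(2) by auto
    then show ?thesis using P[rule_format, of W W'] P[rule_format, of W' W] that by auto
  qed
  then have sep: "W \<inter> \<Union>\<H> = {}" "\<forall>a\<in>W. \<forall>b\<in>\<Union>\<H>. \<not> E a b \<and> \<not> E b a" by blast+
  from facet_cycle_join_chain[OF fin sep zW z] show ?case
    unfolding Union_insert family_value_insert[OF insert.hyps(1,2) W(1)] by blast
qed

lemma admissible_family_red_homology_nonzero:
  assumes "finite V" "symp E" "irreflp E" "admissible_family V E \<H>"
  shows "red_homology_nonzero (K::'k::field itself) (ind_complex E (\<Union>\<H>)) (family_value E \<H>)"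
proof -
  obtain z :: "'a set \<Rightarrow> 'k" where "facet_cycle (ind_complex E (\<Union>\<H>)) (family_value E \<H>) z"
    using admissible_family_facet_cycle[OF assms] by blast
  then show ?thesis by (rule facet_cycle_red_homology_nonzero)
qed

lemma finite_admissible_families: "finite V \<Longrightarrow> finite {\<H>. admissible_family V E \<H>}"
  by (rule finite_subset[of _ "Pow (Pow V)"]) (auto dest: admissible_family_member(1))

lemma admissible_family_add_K2_component:
  assumes fin: "finite T" and E: "symp E"
    and xy: "x \<in> T" "y \<in> T" "x \<noteq> y" "E x y" and y_nbrs: "\<forall>v\<in>T. E y v \<longrightarrow> v = x"
    and adm: "admissible_family (T - closed_nbhd E x) E \<H>"
  shows "\<exists>\<H>'. admissible_family T E \<H>' \<and> Suc (family_value E \<H>) \<le> family_value E \<H>'"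
proof -
  let ?L = "T - closed_nbhd E x"
  have K2: "induced_K2 E {x, y}" unfolding induced_K2_def using xy(3,4) by blast
  have "\<not> E a b \<and> \<not> E b a" if "a \<in> {x, y}" "b \<in> ?L" for a b
  proof -
    have b: "b \<in> T" "b \<noteq> x" "\<not> E x b" using that(2) by (auto simp: closed_nbhd_def)
    then have "\<not> E y b" using y_nbrs by blast
    with b(3) sympD[OF E, of b x] sympD[OF E, of b y] that(1) show ?thesis by blast
  qed
  moreover have "{x, y} \<inter> ?L = {}" using xy(4) by (auto simp: closed_nbhd_def)
  ultimately have sep: "{x, y} \<inter> ?L = {}" "\<forall>a\<in>{x, y}. \<forall>b\<in>?L. \<not> E a b \<and> \<not> E b a"
    by blast+
  have adm': "admissible_family T E (insert {x, y} \<H>)"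
    by (rule admissible_family_insert[OF adm _ _ _ sep]) (use xy K2 in auto)
  have "\<forall>W\<in>\<H>. W \<subseteq> ?L" using admissible_family_member(1)[OF adm] by blast
  moreover have "x \<notin> ?L" by (simp add: closed_nbhd_def)
  ultimately have "{x, y} \<notin> \<H>" by blast
  moreover have "finite \<H>" using admissible_family_finite[OF finite_Diff[OF fin] adm] .
  ultimately have "family_value E (insert {x, y} \<H>) = Suc (family_value E \<H>)"
    using family_value_insert[of \<H> "{x, y}" E] K2 by simp
  with adm' show ?thesis by (metis order_refl)
qed

lemma admissible_member_meeting_component:
  assumes E: "symp E" "irreflp E" and adm: "admissible_family S E \<H>" and ST: "S \<subseteq> T"
    and comp: "\<forall>u\<in>C. \<forall>v\<in>T - C. \<not> E u v \<and> \<not> E v u"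
    and small: "card (C \<inter> S) \<le> 2" and finCS: "finite (C \<inter> S)"
    and W: "W \<in> \<H>" "W \<inter> C \<noteq> {}"
  shows "W = C \<inter> S \<and> induced_K2 E W"
proof -
  have WS: "W \<subseteq> S" and W': "induced_K2 E W \<or> induced_C5 E W"
    using admissible_family_member[OF adm W(1)] by auto
  have closed: "q \<in> C" if "w \<in> W \<inter> C" "q \<in> W" "E w q" for w q
    using comp that WS ST by blast
  show ?thesis
  proof (cases "induced_K2 E W")
    case True
    then obtain p q where pq: "W = {p, q}" "E p q" unfolding induced_K2_def by blast
    have "p \<in> C \<Longrightarrow> q \<in> C" using closed[of p q] pq by blast
    moreover have "q \<in> C \<Longrightarrow> p \<in> C" using closed[of q p] pq sympD[OF E(1) pq(2)] by blast
    ultimately have "W \<subseteq> C \<inter> S" using W(2) WS pq(1) by blast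
    with True card_induced_K2[OF True] small finCS show ?thesis
      by (metis card_seteq)
  next
    case False
    then have C5: "induced_C5 E W" using W' by blast
    obtain w where w: "w \<in> W \<inter> C" using W(2) by blast
    obtain p q where pq: "p \<in> W" "q \<in> W" "p \<noteq> q" "E w p" "E w q"
      using induced_C5_two_nbrs[OF C5 _ E(1)] w by blast
    have "{w, p, q} \<subseteq> C \<inter> S" using closed[OF w pq(1,4)] closed[OF w pq(2,5)] w pq WS by auto
    from card_mono[OF finCS this] have "card {w, p, q} \<le> 2" using small by simp
    moreover have "w \<noteq> p" "w \<noteq> q" using pq(4,5) E(2) by (auto simp: irreflp_def)
    ultimately show ?thesis using pq(3) by simp
  qed
qed

text \<open>An induced pentagon \<open>C\<close> that is a union of components of \<open>G[T]\<close> and meets \<open>S\<close> in at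
  most two vertices can be swapped into a family on \<open>S\<close>: the only member that can meet \<open>C\<close> is an
  edge, worth 1, while \<open>C\<close> is worth 2.\<close>

lemma admissible_family_add_C5_component:
  assumes fin: "finite T" and E: "symp E" "irreflp E"
    and adm: "admissible_family S E \<H>" and ST: "S \<subseteq> T"
    and C: "induced_C5 E C" "C \<subseteq> T" and comp: "\<forall>u\<in>C. \<forall>v\<in>T - C. \<not> E u v \<and> \<not> E v u"
    and small: "card (C \<inter> S) \<le> 2"
  shows "\<exists>\<H>'. admissible_family T E \<H>' \<and> Suc (family_value E \<H>) \<le> family_value E \<H>'"
proof -
  have finH: "finite \<H>" using admissible_family_finite[OF finite_subset[OF ST fin] adm] .
  have finCS: "finite (C \<inter> S)" using finite_subset[OF ST fin] by simp
  have members: "\<forall>W\<in>\<H>. W \<subseteq> S"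
    using admissible_family_member[OF adm] by blast
  have meets: "W = C \<inter> S \<and> induced_K2 E W" if "W \<in> \<H>" "W \<inter> C \<noteq> {}" for W
    by (rule admissible_member_meeting_component[OF E adm ST comp small finCS that])
  define \<H>0 where "\<H>0 = {W\<in>\<H>. W \<inter> C = {}}"
  have H0: "\<H>0 \<subseteq> \<H>" "\<forall>W\<in>\<H>0. W \<subseteq> S - C" using members unfolding \<H>0_def by blast+
  have adm0: "admissible_family (S - C) E \<H>0"
    by (rule admissible_family_restrict[OF admissible_family_subset[OF adm H0(1)] H0(2)])
  have "C \<noteq> {}" using card_induced_C5[OF C(1)] by auto
  then have C_new: "C \<notin> \<H>0" unfolding \<H>0_def by blast
  have sepC: "C \<inter> (S - C) = {}" "\<forall>a\<in>C. \<forall>b\<in>S - C. \<not> E a b \<and> \<not> E b a"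
    using comp ST by blast+
  have adm': "admissible_family T E (insert C \<H>0)"
    by (rule admissible_family_insert[OF adm0 _ C(2) _ sepC]) (use ST C(1) in auto)
  have "family_value E (insert C \<H>0) = 2 + family_value E \<H>0"
  proof -
    have "finite \<H>0" using finH unfolding \<H>0_def by simp
    moreover have "\<not> induced_K2 E C" using card_induced_K2 card_induced_C5[OF C(1)] by force
    ultimately show ?thesis using family_value_insert[OF _ C_new] C(1) by simp
  qed
  moreover have "family_value E \<H> \<le> 1 + family_value E \<H>0"
  proof (cases "C \<inter> S \<in> \<H> \<and> C \<inter> S \<noteq> {}")
    case True
    have "W \<in> insert (C \<inter> S) \<H>0" if "W \<in> \<H>" for W
      using meets[OF that] that by (cases "W \<inter> C = {}") (auto simp: \<H>0_def)
    then have "\<H> = insert (C \<inter> S) \<H>0" using True H0(1) by blast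
    moreover have "C \<inter> S \<notin> \<H>0" using True unfolding \<H>0_def by auto
    moreover have "induced_K2 E (C \<inter> S)" using meets[of "C \<inter> S"] True by auto
    moreover have "finite \<H>0" using finH unfolding \<H>0_def by simp
    ultimately show ?thesis using family_value_insert[of \<H>0 "C \<inter> S" E] by simp
  next
    case False
    have "W \<in> \<H>0" if "W \<in> \<H>" for W
      using meets[OF that] that False by (cases "W \<inter> C = {}") (auto simp: \<H>0_def)
    then have "\<H> = \<H>0" using H0(1) by blast
    then show ?thesis by simp
  qed
  ultimately have "Suc (family_value E \<H>) \<le> family_value E (insert C \<H>0)" by linarith
  with adm' show ?thesis by blast
qed

section \<open>Graphs without triangles and induced paths on five vertices\<close>

lemma has_induced_P5I:
  assumes E: "symp E" "irreflp E"
    and V: "a \<in> V" "b \<in> V" "c \<in> V" "d \<in> V" "e \<in> V"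
    and ed: "E a b" "E b c" "E c d" "E d e"
    and ne: "\<not> E a c" "\<not> E a d" "\<not> E a e" "\<not> E b d" "\<not> E b e" "\<not> E c e"
  shows "has_induced_P5 V E"
  unfolding has_induced_P5_def
proof (intro exI conjI)
  have ed': "E b a" "E c b" "E d c" "E e d" and ne': "\<not> E c a" "\<not> E d a" "\<not> E e a" "\<not> E d b" "\<not> E e b" "\<not> E e c"
    and ir: "\<not> E a a" "\<not> E b b" "\<not> E c c" "\<not> E d d" "\<not> E e e"
    using ed ne E unfolding symp_def irreflp_def by blast+
  have d: "distinct [a, b, c, d, e]"
    using ed ed' ne ne' ir by auto
  let ?f = "(!) [a, b, c, d, e]"
  show "inj_on ?f {0..<5}" by (rule inj_on_nth[OF d]) auto
  have less5: "i < 5 \<longleftrightarrow> i \<in> {0, 1, 2, 3, 4}" for i :: nat by auto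
  show "?f ` {0..<5} \<subseteq> V" using V by (auto simp: less5)
  show "\<forall>i<5. \<forall>j<5. E (?f i) (?f j) \<longleftrightarrow> (j = i + 1 \<or> i = j + 1)"
    unfolding less5 using ed ed' ne ne' ir by auto
qed

locale triangle_P5_free_graph =
  fixes V :: "'a::linorder set" and E :: "'a \<Rightarrow> 'a \<Rightarrow> bool"
  assumes finite_V: "finite V" and sym: "symp E" and irrefl: "irreflp E"
    and no_triangle: "\<not> has_induced_triangle V E" and no_P5: "\<not> has_induced_P5 V E"
begin

lemma E_sym: "E x y \<Longrightarrow> E y x"
  using sym by (rule sympD)

lemma triangle_free: "x \<in> V \<Longrightarrow> y \<in> V \<Longrightarrow> z \<in> V \<Longrightarrow> E x y \<Longrightarrow> E y z \<Longrightarrow> \<not> E x z"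
  using no_triangle unfolding has_induced_triangle_def by blast

lemma P5_free:
  assumes "a \<in> V" "b \<in> V" "c \<in> V" "d \<in> V" "e \<in> V" "E a b" "E b c" "E c d" "E d e"
    "\<not> E a c" "\<not> E a d" "\<not> E a e" "\<not> E b d" "\<not> E b e" "\<not> E c e"
  shows False
  using has_induced_P5I[OF sym irrefl assms] no_P5 by blast

definition incomparable_nbhds :: "'a set \<Rightarrow> bool" where
  "incomparable_nbhds T \<longleftrightarrow> (\<forall>x\<in>T. \<forall>y\<in>T. x \<noteq> y \<longrightarrow> (\<exists>v\<in>T. E y v \<and> \<not> E x v))"

context
  fixes T :: "'a set"
  assumes TV: "T \<subseteq> V" and inc: "incomparable_nbhds T"
begin

lemma pentagon_no_nbr_of_opposite:
  assumes c: "pentagon E c0 c1 c2 c3 c4" and cT: "c0 \<in> T" "c1 \<in> T" "c2 \<in> T" "c3 \<in> T" "c4 \<in> T"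
    and v: "v \<in> T" "v \<noteq> c1" and e0: "E v c0" and e2: "E v c2"
  shows False
proof -
  have V: "c0 \<in> V" "c1 \<in> V" "c2 \<in> V" "c3 \<in> V" "c4 \<in> V" "v \<in> V" using cT v TV by auto
  have e: "E c0 c1" "E c1 c2" "E c2 c3" "E c3 c4" "E c4 c0"
    "\<not> E c0 c2" "\<not> E c1 c3" "\<not> E c2 c4" "\<not> E c3 c0" "\<not> E c4 c1" using c unfolding pentagon_def by auto
  have nv: "\<not> E v c1" "\<not> E v c3" "\<not> E v c4"
    using triangle_free[OF V(6) V(1) V(2) e0 e(1)] triangle_free[OF V(6) V(3) V(4) e2 e(3)]
      triangle_free[OF V(6) V(1) V(5) e0 E_sym[OF e(5)]] by auto
  obtain p where p: "p \<in> T" "E v p" "\<not> E c1 p" using inc cT(2) v unfolding incomparable_nbhds_def by metis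
  have pV: "p \<in> V" using p TV by auto
  have np: "\<not> E p c0" "\<not> E p c2"
    using triangle_free[OF pV V(6) V(1) E_sym[OF p(2)] e0] triangle_free[OF pV V(6) V(3) E_sym[OF p(2)] e2]
    by auto
  \<comment> \<open>the induced paths are \<open>c\<^sub>1 c\<^sub>2 v p c\<^sub>4\<close>, \<open>c\<^sub>1 c\<^sub>0 v p c\<^sub>3\<close> and \<open>p v c\<^sub>0 c\<^sub>4 c\<^sub>3\<close>\<close>
  consider "E p c4" | "\<not> E p c4" "E p c3" | "\<not> E p c4" "\<not> E p c3" by blast
  then show False
  proof cases
    case 1
    have "\<not> E p c3" using triangle_free[OF pV V(5) V(4) 1 E_sym[OF e(4)]] .
    show False
      by (rule P5_free[OF V(2) V(3) V(6) pV V(5) e(2) E_sym[OF e2] p(2) 1])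
        (use nv p(3) e(10) np e(8) E_sym in auto)
  next
    case 2
    show False
      by (rule P5_free[OF V(2) V(1) V(6) pV V(4) E_sym[OF e(1)] E_sym[OF e0] p(2) 2(2)])
        (use nv p(3) e(7) np e(9) E_sym in auto)
  next
    case 3
    show False
      by (rule P5_free[OF pV V(6) V(1) V(5) V(4) E_sym[OF p(2)] e0 E_sym[OF e(5)] E_sym[OF e(4)]])
        (use np 3 nv e(9) E_sym in auto)
  qed
qed

lemma pentagon_no_outside_nbr:
  assumes c: "pentagon E c0 c1 c2 c3 c4" and cT: "c0 \<in> T" "c1 \<in> T" "c2 \<in> T" "c3 \<in> T" "c4 \<in> T"
    and v: "v \<in> T" "v \<notin> {c0, c1, c2, c3, c4}" and e0: "E v c0"
  shows False
proof -
  have V: "c0 \<in> V" "c1 \<in> V" "c2 \<in> V" "c3 \<in> V" "c4 \<in> V" "v \<in> V" using cT v TV by auto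
  have e: "E c0 c1" "E c1 c2" "E c2 c3" "\<not> E c0 c2" "\<not> E c1 c3" "\<not> E c3 c0"
    using c unfolding pentagon_def by auto
  show False
  proof (cases "E v c2")
    case True
    with pentagon_no_nbr_of_opposite[OF c cT v(1)] v e0 show False by blast
  next
    case n2: False
    show False
    proof (cases "E v c3")
      case True
      then show False
        using pentagon_no_nbr_of_opposite[OF pentagon_reflect[OF sym c] cT(1,5,4,3,2) v(1)] v e0 by blast
    next
      case False
      have "\<not> E v c1" using triangle_free[OF V(6) V(1) V(2) e0 e(1)] .
      then show False
        by (rule P5_free[OF V(6) V(1) V(2) V(3) V(4) e0 e(1) e(2) e(3)])
          (use n2 False e(4-6) c E_sym in \<open>auto simp: pentagon_def\<close>)
    qed
  qed
qed

end

lemma pentagon_component: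
  assumes TV: "T \<subseteq> V" and inc: "incomparable_nbhds T" and c: "pentagon E c0 c1 c2 c3 c4"
    and cT: "{c0, c1, c2, c3, c4} \<subseteq> T" and v: "v \<in> T - {c0, c1, c2, c3, c4}"
    and u: "u \<in> {c0, c1, c2, c3, c4}"
  shows "\<not> E v u"
proof
  assume e: "E v u"
  note no_nbr = pentagon_no_outside_nbr[OF TV inc]
  have c1: "pentagon E c1 c2 c3 c4 c0" by (rule pentagon_rotate[OF c])
  have c2: "pentagon E c2 c3 c4 c0 c1" by (rule pentagon_rotate[OF c1])
  have c3: "pentagon E c3 c4 c0 c1 c2" by (rule pentagon_rotate[OF c2])
  have c4: "pentagon E c4 c0 c1 c2 c3" by (rule pentagon_rotate[OF c3])
  from u consider "u = c0" | "u = c1" | "u = c2" | "u = c3" | "u = c4" by blast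
  then show False
  proof cases
    case 1 then show False using no_nbr[OF c, of v] cT v e by auto
  next
    case 2 then show False using no_nbr[OF c1, of v] cT v e by auto
  next
    case 3 then show False using no_nbr[OF c2, of v] cT v e by auto
  next
    case 4 then show False using no_nbr[OF c3, of v] cT v e by auto
  next
    case 5 then show False using no_nbr[OF c4, of v] cT v e by auto
  qed
qed

lemma pentagon_through_vertex:
  assumes TV: "T \<subseteq> V" and inc: "incomparable_nbhds T"
    and x: "x \<in> T" and a: "a1 \<in> T" "a2 \<in> T" "a1 \<noteq> a2" "E x a1" "E x a2"
  obtains c1 c2 where "c1 \<in> T" "c2 \<in> T" "pentagon E x a2 c2 c1 a1"
proof -
  have xV: "x \<in> V" and aV: "a1 \<in> V" "a2 \<in> V" using x a TV by auto
  have na12: "\<not> E a1 a2" using triangle_free[OF aV(1) xV aV(2) E_sym[OF a(4)] a(5)] .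
  obtain c1 where c1: "c1 \<in> T" "E a1 c1" "\<not> E a2 c1" using inc a unfolding incomparable_nbhds_def by metis
  obtain c2 where c2: "c2 \<in> T" "E a2 c2" "\<not> E a1 c2" using inc a unfolding incomparable_nbhds_def by metis
  have cV: "c1 \<in> V" "c2 \<in> V" using c1 c2 TV by auto
  have nxc: "\<not> E x c1" "\<not> E x c2"
    using triangle_free[OF xV aV(1) cV(1) a(4) c1(2)] triangle_free[OF xV aV(2) cV(2) a(5) c2(2)] by auto
  have "E c1 c2"
  proof (rule ccontr)
    assume "\<not> E c1 c2"
    show False
      by (rule P5_free[OF cV(1) aV(1) xV aV(2) cV(2) E_sym[OF c1(2)] E_sym[OF a(4)] a(5) c2(2)])
        (use \<open>\<not> E c1 c2\<close> nxc c1(3) na12 c2(3) E_sym in auto)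
  qed
  moreover have "\<not> E c2 a1" "\<not> E c1 x" using c2(3) nxc(1) E_sym by blast+
  ultimately have "pentagon E x a2 c2 c1 a1"
    unfolding pentagon_def using a(5) c2(2) E_sym[of c1 c2] E_sym[OF c1(2)] E_sym[OF a(4)] nxc(2) c1(3) na12
    by blast
  with c1(1) c2(1) show thesis by (rule that)
qed

lemma unique_nbr_symmetric:
  assumes inc: "incomparable_nbhds T" and x: "x \<in> T" and y: "y \<in> T"
    and nx: "\<forall>v\<in>T. E x v \<longleftrightarrow> v = y"
  shows "\<forall>v\<in>T. E y v \<longrightarrow> v = x"
proof (intro ballI impI)
  fix v assume v: "v \<in> T" "E y v"
  show "v = x"
  proof (rule ccontr)
    assume "v \<noteq> x"
    then obtain w where w: "w \<in> T" "E x w" "\<not> E v w"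
      using inc v(1) x unfolding incomparable_nbhds_def by blast
    then have "w = y" using nx by blast
    with w(3) E_sym[OF v(2)] show False by simp
  qed
qed

lemma pentagon_through_vertex_component:
  assumes TV: "T \<subseteq> V" and inc: "incomparable_nbhds T"
    and x: "x \<in> T" and a: "a1 \<in> T" "a2 \<in> T" "a1 \<noteq> a2" "E x a1" "E x a2"
  obtains C where "induced_C5 E C" "C \<subseteq> T" "\<forall>u\<in>C. \<forall>v\<in>T - C. \<not> E u v \<and> \<not> E v u"
    "card (C \<inter> (T - closed_nbhd E x)) \<le> 2"
proof -
  obtain c1 c2 where c: "c1 \<in> T" "c2 \<in> T" "pentagon E x a2 c2 c1 a1"
    using pentagon_through_vertex[OF TV inc x a] by blast
  let ?C = "{x, a2, c2, c1, a1}"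
  have CT: "?C \<subseteq> T" using x a c by auto
  have comp: "\<forall>u\<in>?C. \<forall>v\<in>T - ?C. \<not> E u v \<and> \<not> E v u"
  proof (intro ballI conjI)
    fix u v assume uv: "u \<in> ?C" "v \<in> T - ?C"
    show "\<not> E v u" by (rule pentagon_component[OF TV inc c(3) CT uv(2,1)])
    then show "\<not> E u v" using E_sym[of u v] by blast
  qed
  have "card (?C \<inter> (T - closed_nbhd E x)) \<le> card {c1, c2}"
    using a by (intro card_mono) (auto simp: closed_nbhd_def)
  also have "\<dots> \<le> 2" by (simp add: card_insert_if)
  finally have "card (?C \<inter> (T - closed_nbhd E x)) \<le> 2" .
  with pentagon_induced_C5[OF sym irrefl c(3)] CT comp show thesis using that by blast
qed

lemma family_grows_at_vertex:
  assumes TV: "T \<subseteq> V" and inc: "incomparable_nbhds T" and x: "x \<in> T" and y: "y \<in> T" "E x y"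
    and adm: "admissible_family (T - closed_nbhd E x) E \<H>"
  shows "\<exists>\<H>'. admissible_family T E \<H>' \<and> Suc (family_value E \<H>) \<le> family_value E \<H>'"
proof -
  have finT: "finite T" using TV finite_V finite_subset by blast
  show ?thesis
  proof (cases "\<exists>a1\<in>T. \<exists>a2\<in>T. a1 \<noteq> a2 \<and> E x a1 \<and> E x a2")
    case True
    then obtain a1 a2 where "a1 \<in> T" "a2 \<in> T" "a1 \<noteq> a2" "E x a1" "E x a2" by blast
    from pentagon_through_vertex_component[OF TV inc x this] obtain C
      where C: "induced_C5 E C" "C \<subseteq> T" "\<forall>u\<in>C. \<forall>v\<in>T - C. \<not> E u v \<and> \<not> E v u"
        "card (C \<inter> (T - closed_nbhd E x)) \<le> 2" by blast
    show ?thesis by (rule admissible_family_add_C5_component[OF finT sym irrefl adm Diff_subset C])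
  next
    case False
    then have "\<forall>v\<in>T. E x v \<longleftrightarrow> v = y" using y by blast
    then have "\<forall>v\<in>T. E y v \<longrightarrow> v = x" using unique_nbr_symmetric[OF inc x y(1)] by blast
    moreover have "x \<noteq> y" using y(2) irrefl unfolding irreflp_def by blast
    ultimately show ?thesis
      using admissible_family_add_K2_component[OF finT sym x y(1) _ y(2) _ adm] by blast
  qed
qed

lemma red_homology_bound:
  assumes "T \<subseteq> V" "red_homology_nonzero (K::'k::field itself) (ind_complex E T) j"
  shows "\<exists>\<H>. admissible_family T E \<H> \<and> j \<le> family_value E \<H>"
  using assms
proof (induction "card T" arbitrary: T j rule: less_induct)
  case less
  have TV: "T \<subseteq> V" and rh: "red_homology_nonzero K (ind_complex E T) j" using less.prems by auto
  have finT: "finite T" using TV finite_V finite_subset by blast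
  have IH: "\<exists>\<H>. admissible_family T' E \<H> \<and> j' \<le> family_value E \<H>"
    if "T' \<subset> T" "red_homology_nonzero K (ind_complex E T') j'" for T' j'
  proof -
    have "T' \<subseteq> V" using that(1) TV by blast
    then show ?thesis using less.hyps[OF psubset_card_mono[OF finT that(1)] _ that(2)] by blast
  qed
  have split: "(\<exists>\<H>. admissible_family T E \<H> \<and> j \<le> family_value E \<H>)
      \<or> (\<exists>k. j = Suc k \<and> red_homology_nonzero K (ind_complex E (T - closed_nbhd E x)) k)"
    if x: "x \<in> T" for x
  proof -
    have "\<exists>\<H>. admissible_family T E \<H> \<and> j \<le> family_value E \<H>"
      if rhx: "red_homology_nonzero K (ind_complex E (T - {x})) j"
    proof -
      obtain \<H> where "admissible_family (T - {x}) E \<H>" "j \<le> family_value E \<H>"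
        using IH[OF _ rhx] x by blast
      then show ?thesis using admissible_family_mono[of "T - {x}" E \<H> T] by blast
    qed
    then show ?thesis using red_homology_nonzero_link_deletion[OF finT x sym irrefl rh] by blast
  qed
  show ?case
  proof (cases j)
    case 0
    then show ?thesis using admissible_family_empty by blast
  next
    case (Suc k)
    consider (isolated) y where "y \<in> T" "\<forall>v\<in>T. \<not> E y v"
      | (dominated) x y where "x \<in> T" "y \<in> T" "x \<noteq> y" "\<forall>v\<in>T. E y v \<longrightarrow> E x v"
      | (incomparable) "incomparable_nbhds T" "\<forall>y\<in>T. \<exists>v\<in>T. E y v"
      unfolding incomparable_nbhds_def by blast
    then show ?thesis
    proof cases
      case isolated
      have "\<forall>v\<in>T. \<not> E y v \<and> \<not> E v y" using isolated(2) E_sym by blast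
      then have False
        using isolated_vertex_red_homology_zero[where E = E, OF finT isolated(1) irreflpD[OF irrefl, of y]] rh
        by blast
      then show ?thesis ..
    next
      case dominated
      then show ?thesis
        using split[OF dominated(1)] dominated_vertex_link_red_homology_zero[OF finT sym irrefl dominated]
        by blast
    next
      case incomparable
      have "T \<noteq> {}" using red_homology_nonzero_le_card[OF finT rh] Suc by auto
      then obtain x y where x: "x \<in> T" and y: "y \<in> T" "E x y" using incomparable(2) by blast
      from split[OF x] show ?thesis
      proof (elim disjE)
        assume "\<exists>k'. j = Suc k' \<and> red_homology_nonzero K (ind_complex E (T - closed_nbhd E x)) k'"
        then have "red_homology_nonzero K (ind_complex E (T - closed_nbhd E x)) k" using Suc by auto
        then obtain \<H> where adm: "admissible_family (T - closed_nbhd E x) E \<H>"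
          and k: "k \<le> family_value E \<H>"
          using IH[of "T - closed_nbhd E x"] x by (auto simp: closed_nbhd_def)
        obtain \<H>' where "admissible_family T E \<H>'" "Suc (family_value E \<H>) \<le> family_value E \<H>'"
          using family_grows_at_vertex[OF TV incomparable(1) x y adm] by blast
        moreover have "j \<le> Suc (family_value E \<H>)" using k Suc by simp
        ultimately show ?thesis by (blast intro: le_trans)
      qed
    qed
  qed
qed
end

lemma Max_eq_if_cofinal:
  fixes A B :: "nat set"
  assumes B: "finite B" "B \<noteq> {}" "B \<subseteq> A" and cofinal: "\<And>a. a \<in> A \<Longrightarrow> \<exists>b\<in>B. a \<le> b"
  shows "Max A = Max B"
proof -
  have le: "a \<le> Max B" if a: "a \<in> A" for a
  proof -
    obtain b where "b \<in> B" "a \<le> b" using cofinal[OF a] by blast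
    then show ?thesis using Max_ge[OF B(1)] le_trans by blast
  qed
  then have "A \<subseteq> {..Max B}" by auto
  then have A: "finite A" "A \<noteq> {}" using finite_subset B(2,3) by blast+
  show ?thesis
  proof (rule antisym)
    show "Max A \<le> Max B" using le Max_in[OF A] .
    show "Max B \<le> Max A" using Max_mono[OF B(3) B(2) A(1)] .
  qed
qed

theorem mainTheorem5:
  fixes V :: "'a::linorder set" and E :: "'a \<Rightarrow> 'a \<Rightarrow> bool"
  assumes "simple_graph V E"
    and "\<not> has_induced_triangle V E"
    and "\<not> has_induced_P5 V E"
  shows "reg TYPE('k::field) V E = Max (family_value E ` {\<H>. admissible_family V E \<H>})"
proof -
  have finV: "finite V" and E: "symp E" "irreflp E"
    using assms(1) unfolding simple_graph_def symp_def irreflp_def by auto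
  interpret triangle_P5_free_graph V E using finV E assms(2,3) by unfold_locales
  let ?J = "{j. \<exists>S\<subseteq>V. red_homology_nonzero TYPE('k) (ind_complex E S) j}"
  let ?F = "family_value E ` {\<H>. admissible_family V E \<H>}"
  have "finite ?F" using finite_admissible_families[OF finV] by simp
  moreover have "?F \<noteq> {}" using admissible_family_empty[of V E] by auto
  moreover have "?F \<subseteq> ?J"
  proof
    fix f assume "f \<in> ?F"
    then obtain \<H> where adm: "admissible_family V E \<H>" and f: "f = family_value E \<H>" by blast
    have "\<Union>\<H> \<subseteq> V" using admissible_family_member(1)[OF adm] by blast
    with admissible_family_red_homology_nonzero[OF finV E adm] show "f \<in> ?J"
      unfolding f by (intro CollectI exI[of _ "\<Union>\<H>"] conjI)
  qed
  moreover have "\<exists>f\<in>?F. j \<le> f" if j: "j \<in> ?J" for j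
  proof -
    obtain S where S: "S \<subseteq> V" "red_homology_nonzero TYPE('k) (ind_complex E S) j"
      using j by blast
    obtain \<H> where "admissible_family S E \<H>" "j \<le> family_value E \<H>"
      using red_homology_bound[OF S] by blast
    then show ?thesis using admissible_family_mono[OF _ S(1)] by (intro bexI[of _ "family_value E \<H>"]) auto
  qed
  ultimately show ?thesis unfolding reg_def by (rule Max_eq_if_cofinal)
qed

end
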